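(* With notation as in the context, for all $1\le i,j\le m+n$ and $0\le r\le\ell$ the element $t^{(r)}_{ij;\mathfrak{b}}\in U(\mathfrak{p})$ is $\mathfrak{m}$-invariant under the $\chi$-twisted action, i.e. $\mathrm{pr}_\chi([x,t^{(r)}_{ij;\mathfrak{b}}])=0$ for all $x\in\mathfrak{m}$; equivalently $t^{(r)}_{ij;\mathfrak{b}}\in\mathcal{W}_\pi$.
   Context: Let $m,n,\ell$ be non-negative integers and $\mathfrak{b}=(\mathfrak{b}_1,\dots,\mathfrak{b}_{m+n})$ a sequence with $m$ entries $\delta$ and $n$ entries $\epsilon$; put $|i|=\bar0$ if $\mathfrak{b}_i=\delta$, $|i|=\bar1$ if $\mathfrak{b}_i=\epsilon$. Let $\pi$ be a rectangular array of boxes with $m+n$ rows (numbered top to bottom) and $\ell$ columns (numbered left to right); row $i$ has parity $|i|$. For a box $a$ write $\mathrm{row}(a)$, $\mathrm{col}(a)$, $|a|:=|\mathrm{row}(a)|$. Let $V=\mathbb{C}^{M|N}$ ($M=m\ell$, $N=n\ell$) have homogeneous basis $\{v_a\}$ indexed by the boxes, $v_a$ of parity $|a|$; $\mathfrak{g}=\mathfrak{gl}_{M|N}=\mathrm{End}(V)$ with matrix units $e_{a,b}$ of parity $|a|+|b|$; brackets are supercommutators. Let $e=\sum e_{a,b}$ over pairs of boxes in the same row with $\mathrm{col}(b)=\mathrm{col}(a)+1$; $\chi(y)=\mathrm{str}(ye)$. Let $\mathfrak{p}=\mathrm{span}\{e_{a,b}:\mathrm{col}(a)\le\mathrm{col}(b)\}$,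 $\mathfrak{m}=\mathrm{span}\{e_{a,b}:\mathrm{col}(a)>\mathrm{col}(b)\}$, $I_\chi$ the left ideal of $U(\mathfrak{g})$ generated by $\{y-\chi(y):y\in\mathfrak{m}\}$; $U(\mathfrak{g})=U(\mathfrak{p})\oplus I_\chi$ and $\mathrm{pr}_\chi:U(\mathfrak{g})\to U(\mathfrak{p})$ is the projection; $\mathcal{W}_\pi=\{y\in U(\mathfrak{p}):\mathrm{pr}_\chi([x,y])=0\ \forall x\in\mathfrak{m}\}$. For $1\le c\le\ell$, $\rho_c=-(\ell-c)(m-n)$; $\tilde e_{a,b}=(-1)^{\mathrm{col}(b)-\mathrm{col}(a)}(e_{a,b}+\delta_{ab}(-1)^{|a|}\rho_{\mathrm{col}(a)})$. Set $t^{(0)}_{ij;\mathfrak{b}}=\delta_{ij}$ and for $1\le r\le\ell$, $t^{(r)}_{ij;\mathfrak{b}}=\sum_{s=1}^r\sum(-1)^{|a_1|+\cdots+|a_s|}\tilde e_{a_1,b_1}\cdots\tilde e_{a_s,b_s}$, the inner sum over boxes $a_1,\dots,a_s,b_1,\dots,b_s$ with $\sum_t(\mathrm{col}(b_t)-\mathrm{col}(a_t)+1)=r$; $\mathrm{col}(a_t)\le\mathrm{col}(b_t)$ for all $t$; $\mathrm{col}(b_t)<\mathrm{col}(a_{t+1})$ and $\mathrm{row}(b_t)=\mathrm{row}(a_{t+1})$ for $t<s$; $\mathrm{row}(a_1)=i$, $\mathrm{row}(b_s)=j$. *)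

theory Defs
  imports Complex_Main
begin

text \<open>The parity sequence is a predicate par on rows: par i = True iff b_i = epsilon (odd).
  The matrix unit e_{a,b} is indexed by the generator (a,b).\<close>

type_synonym box = "nat \<times> nat"
type_synonym gen = "box \<times> box"

definition row :: "box \<Rightarrow> nat" where "row a = fst a"
definition col :: "box \<Rightarrow> nat" where "col a = snd a"

definition boxes :: "nat \<Rightarrow> nat \<Rightarrow> nat \<Rightarrow> box set" where
  "boxes m n l = {1..m+n} \<times> {1..l}"

definition gens :: "nat \<Rightarrow> nat \<Rightarrow> nat \<Rightarrow> gen set" where
  "gens m n l = boxes m n l \<times> boxes m n l"

definition bpar :: "(nat \<Rightarrow> bool) \<Rightarrow> box \<Rightarrow> bool" where
  "bpar par a = par (row a)"

definition gpar :: "(nat \<Rightarrow> bool) \<Rightarrow> gen \<Rightarrow> bool" where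
  "gpar par g = (bpar par (fst g) \<noteq> bpar par (snd g))"

definition sgn1 :: "bool \<Rightarrow> complex" where
  "sgn1 p = (if p then -1 else 1)"

definition sgn2 :: "bool \<Rightarrow> bool \<Rightarrow> complex" where
  "sgn2 p q = (if p \<and> q then -1 else 1)"

type_synonym fa = "gen list \<Rightarrow> complex"

definition FA :: "nat \<Rightarrow> nat \<Rightarrow> nat \<Rightarrow> fa set" where
  "FA m n l = {f. finite {w. f w \<noteq> 0} \<and> (\<forall>w. f w \<noteq> 0 \<longrightarrow> set w \<subseteq> gens m n l)}"

definition fa_zero :: fa where "fa_zero = (\<lambda>w. 0)"
definition fa_one :: fa where "fa_one = (\<lambda>w. if w = [] then 1 else 0)"
definition fa_gen :: "gen \<Rightarrow> fa" where "fa_gen g = (\<lambda>w. if w = [g] then 1 else 0)"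
definition fa_add :: "fa \<Rightarrow> fa \<Rightarrow> fa" where "fa_add f g = (\<lambda>w. f w + g w)"
definition fa_scale :: "complex \<Rightarrow> fa \<Rightarrow> fa" where "fa_scale c f = (\<lambda>w. c * f w)"
definition fa_diff :: "fa \<Rightarrow> fa \<Rightarrow> fa" where "fa_diff f g = (\<lambda>w. f w - g w)"
definition fa_mult :: "fa \<Rightarrow> fa \<Rightarrow> fa" where
  "fa_mult f g = (\<lambda>w. \<Sum>k\<le>length w. f (take k w) * g (drop k w))"
definition fa_prod :: "fa list \<Rightarrow> fa" where
  "fa_prod xs = foldr fa_mult xs fa_one"
definition fa_sum :: "'i set \<Rightarrow> ('i \<Rightarrow> fa) \<Rightarrow> fa" where
  "fa_sum S F = (\<lambda>w. \<Sum>s\<in>S. F s w)"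

definition fa_sbr :: "bool \<Rightarrow> bool \<Rightarrow> fa \<Rightarrow> fa \<Rightarrow> fa" where
  "fa_sbr p q x y = fa_diff (fa_mult x y) (fa_scale (sgn2 p q) (fa_mult y x))"

definition gl_br :: "(nat \<Rightarrow> bool) \<Rightarrow> gen \<Rightarrow> gen \<Rightarrow> fa" where
  "gl_br par g1 g2 =
     fa_diff (if snd g1 = fst g2 then fa_gen (fst g1, snd g2) else fa_zero)
             (fa_scale (sgn2 (gpar par g1) (gpar par g2))
                (if snd g2 = fst g1 then fa_gen (fst g2, snd g1) else fa_zero))"

definition Urel :: "(nat \<Rightarrow> bool) \<Rightarrow> gen \<Rightarrow> gen \<Rightarrow> fa" where
  "Urel par g1 g2 = fa_diff (fa_sbr (gpar par g1) (gpar par g2) (fa_gen g1) (fa_gen g2)) (gl_br par g1 g2)"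

text \<open>Two-sided ideal J of the free algebra with U(g) = FA / J.\<close>
inductive_set Jideal :: "nat \<Rightarrow> nat \<Rightarrow> nat \<Rightarrow> (nat \<Rightarrow> bool) \<Rightarrow> fa set"
  for m n l par where
  J_rel: "g1 \<in> gens m n l \<Longrightarrow> g2 \<in> gens m n l \<Longrightarrow> Urel par g1 g2 \<in> Jideal m n l par"
| J_zero: "fa_zero \<in> Jideal m n l par"
| J_add: "x \<in> Jideal m n l par \<Longrightarrow> y \<in> Jideal m n l par \<Longrightarrow> fa_add x y \<in> Jideal m n l par"
| J_scale: "x \<in> Jideal m n l par \<Longrightarrow> fa_scale c x \<in> Jideal m n l par"
| J_left: "x \<in> Jideal m n l par \<Longrightarrow> u \<in> FA m n l \<Longrightarrow> fa_mult u x \<in> Jideal m n l par"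
| J_right: "x \<in> Jideal m n l par \<Longrightarrow> u \<in> FA m n l \<Longrightarrow> fa_mult x u \<in> Jideal m n l par"

type_synonym mat = "box \<Rightarrow> box \<Rightarrow> complex"

definition munit :: "gen \<Rightarrow> mat" where
  "munit g = (\<lambda>a b. if (a, b) = g then 1 else 0)"

definition mmult :: "box set \<Rightarrow> mat \<Rightarrow> mat \<Rightarrow> mat" where
  "mmult B X Y = (\<lambda>a c. \<Sum>b\<in>B. X a b * Y b c)"

definition str :: "(nat \<Rightarrow> bool) \<Rightarrow> box set \<Rightarrow> mat \<Rightarrow> complex" where
  "str par B X = (\<Sum>a\<in>B. sgn1 (bpar par a) * X a a)"

definition emat :: "nat \<Rightarrow> nat \<Rightarrow> nat \<Rightarrow> mat" where
  "emat m n l = (\<lambda>a b. if a \<in> boxes m n l \<and> b \<in> boxes m n l \<and> row a = row b \<and> col b = col a + 1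
                        then 1 else 0)"

definition chi :: "nat \<Rightarrow> nat \<Rightarrow> nat \<Rightarrow> (nat \<Rightarrow> bool) \<Rightarrow> gen \<Rightarrow> complex" where
  "chi m n l par g = str par (boxes m n l) (mmult (boxes m n l) (munit g) (emat m n l))"

definition mgens :: "nat \<Rightarrow> nat \<Rightarrow> nat \<Rightarrow> gen set" where
  "mgens m n l = {g \<in> gens m n l. col (fst g) > col (snd g)}"

text \<open>Preimage in the free algebra of the left ideal I_chi of U(g) generated by y - chi(y), y in m.
  An element u of U(g) satisfies pr_chi(u) = 0 iff u lies in I_chi.\<close>
inductive_set Ichi :: "nat \<Rightarrow> nat \<Rightarrow> nat \<Rightarrow> (nat \<Rightarrow> bool) \<Rightarrow> fa set"
  for m n l par where
  I_J: "x \<in> Jideal m n l par \<Longrightarrow> x \<in> Ichi m n l par"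
| I_gen: "g \<in> mgens m n l \<Longrightarrow> u \<in> FA m n l \<Longrightarrow>
     fa_mult u (fa_diff (fa_gen g) (fa_scale (chi m n l par g) fa_one)) \<in> Ichi m n l par"
| I_add: "x \<in> Ichi m n l par \<Longrightarrow> y \<in> Ichi m n l par \<Longrightarrow> fa_add x y \<in> Ichi m n l par"
| I_scale: "x \<in> Ichi m n l par \<Longrightarrow> fa_scale c x \<in> Ichi m n l par"
| I_left: "x \<in> Ichi m n l par \<Longrightarrow> u \<in> FA m n l \<Longrightarrow> fa_mult u x \<in> Ichi m n l par"

text \<open>Preimage of U(p): elements of FA supported on words in generators of p (col a <= col b),
  modulo J.\<close>
definition pgens :: "nat \<Rightarrow> nat \<Rightarrow> nat \<Rightarrow> gen set" where
  "pgens m n l = {g \<in> gens m n l. col (fst g) \<le> col (snd g)}"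

definition Up :: "nat \<Rightarrow> nat \<Rightarrow> nat \<Rightarrow> (nat \<Rightarrow> bool) \<Rightarrow> fa set" where
  "Up m n l par = {fa_add u j | u j. u \<in> FA m n l \<and> (\<forall>w. u w \<noteq> 0 \<longrightarrow> set w \<subseteq> pgens m n l)
                                   \<and> j \<in> Jideal m n l par}"

text \<open>The supercommutator [x, y] for x = sum of c(g) e_g over g in m and y homogeneous of parity q.\<close>
definition br_m :: "nat \<Rightarrow> nat \<Rightarrow> nat \<Rightarrow> (nat \<Rightarrow> bool) \<Rightarrow> (gen \<Rightarrow> complex) \<Rightarrow> bool \<Rightarrow> fa \<Rightarrow> fa" where
  "br_m m n l par c q y = fa_sum (mgens m n l) (\<lambda>g. fa_scale (c g) (fa_sbr (gpar par g) q (fa_gen g) y))"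

definition rho :: "nat \<Rightarrow> nat \<Rightarrow> nat \<Rightarrow> nat \<Rightarrow> int" where
  "rho m n l c = - (int l - int c) * (int m - int n)"

definition etilde :: "nat \<Rightarrow> nat \<Rightarrow> nat \<Rightarrow> (nat \<Rightarrow> bool) \<Rightarrow> gen \<Rightarrow> fa" where
  "etilde m n l par g =
     fa_scale ((-1) ^ nat \<bar>int (col (snd g)) - int (col (fst g))\<bar>)
       (fa_add (fa_gen g)
         (fa_scale (if fst g = snd g then sgn1 (bpar par (fst g)) * of_int (rho m n l (col (fst g))) else 0)
            fa_one))"

definition tseqs :: "nat \<Rightarrow> nat \<Rightarrow> nat \<Rightarrow> nat \<Rightarrow> nat \<Rightarrow> nat \<Rightarrow> nat \<Rightarrow> gen list set" where
  "tseqs m n l r i j s = {ps. length ps = s \<and> set ps \<subseteq> gens m n l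
      \<and> (\<forall>k<s. col (fst (ps!k)) \<le> col (snd (ps!k)))
      \<and> (\<Sum>k<s. col (snd (ps!k)) - col (fst (ps!k)) + 1) = r
      \<and> (\<forall>k. k + 1 < s \<longrightarrow> col (snd (ps!k)) < col (fst (ps!(k+1)))
                          \<and> row (snd (ps!k)) = row (fst (ps!(k+1))))
      \<and> (0 < s \<longrightarrow> row (fst (ps!0)) = i \<and> row (snd (ps!(s-1))) = j)}"

definition tterm :: "nat \<Rightarrow> nat \<Rightarrow> nat \<Rightarrow> (nat \<Rightarrow> bool) \<Rightarrow> gen list \<Rightarrow> fa" where
  "tterm m n l par ps = fa_scale (\<Prod>g\<leftarrow>ps. sgn1 (bpar par (fst g))) (fa_prod (map (etilde m n l par) ps))"

definition tT :: "nat \<Rightarrow> nat \<Rightarrow> nat \<Rightarrow> (nat \<Rightarrow> bool) \<Rightarrow> nat \<Rightarrow> nat \<Rightarrow> nat \<Rightarrow> fa" where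
  "tT m n l par r i j = (if r = 0 then (if i = j then fa_one else fa_zero)
     else fa_sum {1..r} (\<lambda>s. fa_sum (tseqs m n l r i j s) (tterm m n l par)))"

end

theory Submission
  imports Defs
begin

text \<open>Since \<open>I\<^sub>\<chi>\<close> is a left ideal containing \<open>e\<^sub>y - \<chi>(e\<^sub>y)\<close> for \<open>y \<in> \<frak>m\<close>, every \<open>u\<close> satisfies
  \<open>u e\<^sub>y \<equiv> \<chi>(e\<^sub>y) u\<close> modulo \<open>I\<^sub>\<chi>\<close>. It therefore suffices to show \<open>e\<^sub>y t \<equiv> \<chi>(e\<^sub>y) t\<close>
  for the generators of \<open>\<frak>m\<close>: the supercommutator \<open>[e\<^sub>y, t]\<close> then vanishes modulo \<open>I\<^sub>\<chi>\<close>,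
  because \<open>\<chi>(e\<^sub>y) \<noteq> 0\<close> only for even \<open>e\<^sub>y\<close>. The generators joining adjacent columns,
  \<open>e\<^sub>x\<close> with \<open>x = ((P, c + 1), (Q, c))\<close>, generate \<open>\<frak>m\<close> under commutators, and \<open>\<chi>\<close> vanishes on
  these commutators, so only they need to be treated. Moving \<open>e\<^sub>x\<close> through each product of
  elements \<open>\<tilde>e\<close> by the super Leibniz rule leaves \<open>\<chi>(e\<^sub>x) t\<close> plus one term for every letter of
  every admissible sequence. Reduced modulo \<open>I\<^sub>\<chi>\<close>, these terms fall into six families of words
  that cancel in pairs under explicit bijections of admissible sequences; in one pairing the
  shift difference \<open>\<rho>\<^sub>c - \<rho>\<^sub>c\<^sub>+\<^sub>1 = -(m - n)\<close> is cancelled by the sum of the row signs, which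
  is \<open>m - n\<close>.\<close>

notation fa_mult (infixl "\<odot>" 70)
  and fa_add (infixl "\<oplus>" 65)
  and fa_diff (infixl "\<ominus>" 65)
  and fa_scale (infixr "\<cdot>" 69)

section \<open>The free algebra\<close>

definition splits :: "'a list \<Rightarrow> ('a list \<times> 'a list) set" where
  "splits w = {(u, v). u @ v = w}"

lemma splits_eq_image: "splits w = (\<lambda>k. (take k w, drop k w)) ` {..length w}"
proof
  show "splits w \<subseteq> (\<lambda>k. (take k w, drop k w)) ` {..length w}"
  proof
    fix p assume "p \<in> splits w"
    then obtain u v where "p = (u, v)" "u @ v = w" unfolding splits_def by auto
    then show "p \<in> (\<lambda>k. (take k w, drop k w)) ` {..length w}"
      by (auto intro!: image_eqI[of _ _ "length u"])
  qed
qed (auto simp: splits_def)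

lemma finite_splits [simp]: "finite (splits w)"
  by (simp add: splits_eq_image)

lemma fa_mult_eq_sum_splits: "(f \<odot> g) w = (\<Sum>(u, v)\<in>splits w. f u * g v)"
proof -
  have "inj_on (\<lambda>k. (take k w, drop k w)) {..length w}"
    by (rule inj_onI) (metis Pair_inject atMost_iff length_take min.absorb2)
  then show ?thesis
    unfolding fa_mult_def splits_eq_image by (simp add: sum.reindex)
qed

lemma fa_mult_assoc: "f \<odot> g \<odot> h = f \<odot> (g \<odot> h)"
proof
  fix w :: "gen list"
  define S3 where "S3 = {(u, v, z). u @ v @ z = w}"
  have "(f \<odot> g \<odot> h) w = (\<Sum>((x, z), (u, v))\<in>(SIGMA p:splits w. splits (fst p)). f u * g v * h z)"
    by (simp add: fa_mult_eq_sum_splits sum_distrib_right sum.Sigma case_prod_unfold)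
  also have "\<dots> = (\<Sum>(u, v, z)\<in>S3. f u * g v * h z)"
    by (rule sum.reindex_bij_witness[where i="\<lambda>(u, v, z). ((u @ v, z), (u, v))"
          and j="\<lambda>((x, z), (u, v)). (u, v, z)"]) (auto simp: splits_def S3_def)
  also have "\<dots> = (\<Sum>((u, y), (v, z))\<in>(SIGMA p:splits w. splits (snd p)). f u * g v * h z)"
    by (rule sum.reindex_bij_witness[where j="\<lambda>(u, v, z). ((u, v @ z), (v, z))"
          and i="\<lambda>((u, y), (v, z)). (u, v, z)"]) (auto simp: splits_def S3_def)
  also have "\<dots> = (f \<odot> (g \<odot> h)) w"
    by (simp add: fa_mult_eq_sum_splits sum_distrib_left sum.Sigma case_prod_unfold mult.assoc)
  finally show "(f \<odot> g \<odot> h) w = (f \<odot> (g \<odot> h)) w" .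
qed

lemma fa_mult_one_left [simp]: "fa_one \<odot> f = f"
proof
  fix w
  have "(fa_one \<odot> f) w = (\<Sum>k\<le>length w. if k = 0 then f w else 0)"
    unfolding fa_mult_def fa_one_def by (rule sum.cong) auto
  then show "(fa_one \<odot> f) w = f w" by simp
qed

lemma fa_mult_one_right [simp]: "f \<odot> fa_one = f"
proof
  fix w
  have "(f \<odot> fa_one) w = (\<Sum>k\<le>length w. if k = length w then f w else 0)"
    unfolding fa_mult_def fa_one_def by (rule sum.cong) auto
  then show "(f \<odot> fa_one) w = f w" by simp
qed

lemma fa_mult_zero [simp]: "fa_zero \<odot> h = fa_zero" "h \<odot> fa_zero = fa_zero"
  by (rule ext, simp add: fa_mult_def fa_zero_def)+

lemma fa_mult_add_left: "(f \<oplus> g) \<odot> h = f \<odot> h \<oplus> g \<odot> h"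
  and fa_mult_add_right: "h \<odot> (f \<oplus> g) = h \<odot> f \<oplus> h \<odot> g"
  and fa_mult_diff_left: "(f \<ominus> g) \<odot> h = f \<odot> h \<ominus> g \<odot> h"
  and fa_mult_diff_right: "h \<odot> (f \<ominus> g) = h \<odot> f \<ominus> h \<odot> g"
  and fa_mult_scale_left: "(c \<cdot> f) \<odot> h = c \<cdot> (f \<odot> h)"
  and fa_mult_scale_right: "h \<odot> (c \<cdot> f) = c \<cdot> (h \<odot> f)"
  by (rule ext; simp add: fa_mult_def fa_add_def fa_diff_def fa_scale_def algebra_simps
        sum.distrib sum_subtractf sum_distrib_left)+

lemma fa_mult_sum_right: "finite S \<Longrightarrow> h \<odot> fa_sum S F = fa_sum S (\<lambda>s. h \<odot> F s)"
  by (rule ext) (simp add: fa_mult_def fa_sum_def sum_distrib_left sum.swap[of _ S])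

lemma fa_add_commute: "f \<oplus> g = g \<oplus> f"
  and fa_add_zero [simp]: "f \<oplus> fa_zero = f" "fa_zero \<oplus> f = f"
  and fa_scale_zero [simp]: "c \<cdot> fa_zero = fa_zero" "0 \<cdot> f = fa_zero" "1 \<cdot> f = f"
  and fa_scale_scale [simp]: "c \<cdot> d \<cdot> f = (c * d) \<cdot> f"
  and fa_diff_self [simp]: "f \<ominus> f = fa_zero"
  and fa_diff_eq_add: "f \<ominus> g = f \<oplus> (-1) \<cdot> g"
  by (rule ext; simp add: fa_add_def fa_zero_def fa_scale_def fa_diff_def)+

lemma fa_sum_insert: "finite S \<Longrightarrow> a \<notin> S \<Longrightarrow> fa_sum (insert a S) F = F a \<oplus> fa_sum S F"
  and fa_sum_reindex: "inj_on h S \<Longrightarrow> fa_sum (h ` S) F = fa_sum S (\<lambda>s. F (h s))"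
  and fa_scale_sum: "c \<cdot> fa_sum S F = fa_sum S (\<lambda>s. c \<cdot> F s)"
  and fa_sum_add: "fa_sum S (\<lambda>s. F s \<oplus> G s) = fa_sum S F \<oplus> fa_sum S G"
  and fa_sum_diff: "fa_sum S (\<lambda>s. F s \<ominus> G s) = fa_sum S F \<ominus> fa_sum S G"
  and fa_sum_scale_left: "fa_sum S (\<lambda>s. k s \<cdot> f) = (\<Sum>s\<in>S. k s) \<cdot> f"
  by (rule ext; simp add: fa_sum_def fa_add_def fa_diff_def fa_scale_def sum.reindex
        sum_distrib_left sum_distrib_right sum.distrib sum_subtractf)+

lemma fa_sum_Times:
  "finite A \<Longrightarrow> finite B \<Longrightarrow> fa_sum (A \<times> B) F = fa_sum A (\<lambda>a. fa_sum B (\<lambda>b. F (a, b)))"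
  by (rule ext) (simp add: fa_sum_def sum.cartesian_product)

lemma fa_sum_cong: "(\<And>s. s \<in> S \<Longrightarrow> F s = F' s) \<Longrightarrow> fa_sum S F = fa_sum S F'"
  by (rule ext) (simp add: fa_sum_def)

lemma fa_sum_reindex_bij: "bij_betw \<phi> A B \<Longrightarrow> fa_sum B F = fa_sum A (\<lambda>a. F (\<phi> a))"
  by (rule ext) (simp add: fa_sum_def sum.reindex_bij_betw[symmetric])

lemma fa_sum_if: "finite S \<Longrightarrow> fa_sum S (\<lambda>s. if C s then F s else fa_zero) = fa_sum {s\<in>S. C s} F"
proof
  fix w assume "finite S"
  then show "fa_sum S (\<lambda>s. if C s then F s else fa_zero) w = fa_sum {s\<in>S. C s} F w"
    unfolding fa_sum_def fa_zero_def by (simp add: sum.inter_filter if_distrib[of "\<lambda>f. f w"])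
qed

lemma fa_sum_subset_diff: "finite S \<Longrightarrow> B \<subseteq> S \<Longrightarrow> fa_sum S F = fa_sum B F \<oplus> fa_sum (S - B) F"
  by (rule ext) (simp add: fa_sum_def fa_add_def sum.subset_diff[of B S] add.commute)

definition on_set :: "'a set \<Rightarrow> ('a \<Rightarrow> fa) \<Rightarrow> 'a \<Rightarrow> fa" where
  "on_set A F a = (if a \<in> A then F a else fa_zero)"

lemma fa_sum_on_set:
  assumes "finite S" "A \<subseteq> S"
  shows "fa_sum S (on_set A F) = fa_sum A F"
proof -
  have "{a \<in> S. a \<in> A} = A" using assms(2) by auto
  then show ?thesis unfolding on_set_def fa_sum_if[OF assms(1)] by simp
qed

lemma bij_betw_inverseI:
  "(\<And>a. a \<in> A \<Longrightarrow> f a \<in> B) \<Longrightarrow> (\<And>b. b \<in> B \<Longrightarrow> g b \<in> A) \<Longrightarrow>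
   (\<And>a. a \<in> A \<Longrightarrow> g (f a) = a) \<Longrightarrow> (\<And>b. b \<in> B \<Longrightarrow> f (g b) = b) \<Longrightarrow> bij_betw f A B"
  by (rule bij_betw_byWitness[where f'=g]) auto

lemma fa_sum_cancel_bij:
  assumes "bij_betw \<phi> A B" and "\<And>a. a \<in> A \<Longrightarrow> G (\<phi> a) = (-1) \<cdot> F a"
  shows "fa_sum A F \<oplus> fa_sum B G = fa_zero"
proof -
  have "fa_sum B G = fa_sum A (\<lambda>a. (-1) \<cdot> F a)"
    by (simp add: fa_sum_reindex_bij[OF assms(1)] assms(2) cong: fa_sum_cong)
  then show ?thesis by (intro ext) (simp add: fa_sum_def fa_add_def fa_scale_def fa_zero_def sum_negf)
qed

lemma fa_mult_nonzero_split: "(f \<odot> g) w \<noteq> 0 \<Longrightarrow> \<exists>u v. w = u @ v \<and> f u \<noteq> 0 \<and> g v \<noteq> 0"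
  by (force simp: fa_mult_eq_sum_splits splits_def intro: sum.neutral)

definition supported_on :: "gen set \<Rightarrow> fa \<Rightarrow> bool" where
  "supported_on S f \<longleftrightarrow> (\<forall>w. f w \<noteq> 0 \<longrightarrow> set w \<subseteq> S)"

definition finite_support :: "fa \<Rightarrow> bool" where
  "finite_support f \<longleftrightarrow> finite {w. f w \<noteq> 0}"

lemma supported_on_mult: "supported_on S f \<Longrightarrow> supported_on S g \<Longrightarrow> supported_on S (f \<odot> g)"
  unfolding supported_on_def by (metis Un_subset_iff fa_mult_nonzero_split set_append)

lemma supported_on_add: "supported_on S f \<Longrightarrow> supported_on S g \<Longrightarrow> supported_on S (f \<oplus> g)"
  unfolding supported_on_def fa_add_def by (metis add.right_neutral add_0)

lemma supported_on_scale: "supported_on S f \<Longrightarrow> supported_on S (c \<cdot> f)"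
  and supported_on_zero: "supported_on S fa_zero"
  and supported_on_one: "supported_on S fa_one"
  and supported_on_gen: "x \<in> S \<Longrightarrow> supported_on S (fa_gen x)"
  by (auto simp: supported_on_def fa_add_def fa_scale_def fa_zero_def fa_one_def fa_gen_def)

lemma supported_on_sum: "(\<And>s. s \<in> T \<Longrightarrow> supported_on S (F s)) \<Longrightarrow> supported_on S (fa_sum T F)"
  unfolding supported_on_def fa_sum_def by (meson sum.neutral)

lemma finite_support_mult: "finite_support f \<Longrightarrow> finite_support g \<Longrightarrow> finite_support (f \<odot> g)"
proof -
  assume "finite_support f" "finite_support g"
  then have "finite ((\<lambda>(u, v). u @ v) ` ({w. f w \<noteq> 0} \<times> {w. g w \<noteq> 0}))"
    unfolding finite_support_def by auto
  moreover have "{w. (f \<odot> g) w \<noteq> 0} \<subseteq> (\<lambda>(u, v). u @ v) ` ({w. f w \<noteq> 0} \<times> {w. g w \<noteq> 0})"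
    using fa_mult_nonzero_split by fastforce
  ultimately show ?thesis unfolding finite_support_def by (rule finite_subset[rotated])
qed

lemma finite_support_add: "finite_support f \<Longrightarrow> finite_support g \<Longrightarrow> finite_support (f \<oplus> g)"
  unfolding finite_support_def fa_add_def
  by (rule finite_subset[of _ "{w. f w \<noteq> 0} \<union> {w. g w \<noteq> 0}"]) auto

lemma finite_support_scale: "finite_support f \<Longrightarrow> finite_support (c \<cdot> f)"
  unfolding finite_support_def fa_scale_def by (rule finite_subset[of _ "{w. f w \<noteq> 0}"]) auto

lemma finite_support_one: "finite_support fa_one"
  and finite_support_zero: "finite_support fa_zero"
  and finite_support_gen: "finite_support (fa_gen g)"
  unfolding finite_support_def fa_one_def fa_zero_def fa_gen_def
  by (auto intro: finite_subset[of _ "{[]}"] finite_subset[of _ "{[g]}"])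

lemma finite_support_sum:
  "finite T \<Longrightarrow> (\<And>s. s \<in> T \<Longrightarrow> finite_support (F s)) \<Longrightarrow> finite_support (fa_sum T F)"
  unfolding finite_support_def fa_sum_def
  by (rule finite_subset[of _ "\<Union>s\<in>T. {w. F s w \<noteq> 0}"]) (auto intro: sum.neutral)

lemma FA_iff: "f \<in> FA m n l \<longleftrightarrow> finite_support f \<and> supported_on (gens m n l) f"
  unfolding FA_def finite_support_def supported_on_def by auto

lemma FA_mult: "f \<in> FA m n l \<Longrightarrow> g \<in> FA m n l \<Longrightarrow> f \<odot> g \<in> FA m n l"
  and FA_add: "f \<in> FA m n l \<Longrightarrow> g \<in> FA m n l \<Longrightarrow> f \<oplus> g \<in> FA m n l"
  and FA_scale: "f \<in> FA m n l \<Longrightarrow> c \<cdot> f \<in> FA m n l"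
  and FA_one: "fa_one \<in> FA m n l"
  and FA_gen: "x \<in> gens m n l \<Longrightarrow> fa_gen x \<in> FA m n l"
  by (simp_all add: FA_iff finite_support_mult supported_on_mult finite_support_add
      supported_on_add finite_support_scale supported_on_scale finite_support_one
      supported_on_one finite_support_gen supported_on_gen)

lemma FA_sum: "finite T \<Longrightarrow> (\<And>s. s \<in> T \<Longrightarrow> F s \<in> FA m n l) \<Longrightarrow> fa_sum T F \<in> FA m n l"
  by (simp add: FA_iff finite_support_sum supported_on_sum)

definition fa_subspace :: "fa set \<Rightarrow> bool" where
  "fa_subspace S \<longleftrightarrow> fa_zero \<in> S \<and> (\<forall>x\<in>S. \<forall>y\<in>S. x \<oplus> y \<in> S) \<and> (\<forall>c. \<forall>x\<in>S. c \<cdot> x \<in> S)"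

lemma subspace_Jideal: "fa_subspace (Jideal m n l par)"
  and subspace_Ichi: "fa_subspace (Ichi m n l par)"
  by (auto simp: fa_subspace_def intro: Jideal.intros Ichi.intros)

context
  fixes S :: "fa set"
  assumes S: "fa_subspace S"
begin

lemma subspace_sum: "finite T \<Longrightarrow> (\<And>t. t \<in> T \<Longrightarrow> F t \<in> S) \<Longrightarrow> fa_sum T F \<in> S"
proof (induction T rule: finite_induct)
  case empty
  have "fa_sum {} F = fa_zero" by (rule ext) (simp add: fa_sum_def fa_zero_def)
  then show ?case using S by (simp add: fa_subspace_def)
next
  case (insert t T)
  then show ?case using S by (simp add: fa_sum_insert fa_subspace_def)
qed

lemma cong_refl: "f \<ominus> f \<in> S"
  and cong_add: "f \<ominus> g \<in> S \<Longrightarrow> f' \<ominus> g' \<in> S \<Longrightarrow> (f \<oplus> f') \<ominus> (g \<oplus> g') \<in> S"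
  and cong_scale: "f \<ominus> g \<in> S \<Longrightarrow> c \<cdot> f \<ominus> c \<cdot> g \<in> S"
  and cong_sym: "f \<ominus> g \<in> S \<Longrightarrow> g \<ominus> f \<in> S"
  and cong_trans: "f \<ominus> g \<in> S \<Longrightarrow> g \<ominus> h \<in> S \<Longrightarrow> f \<ominus> h \<in> S"
proof -
  have eqs: "(f \<oplus> f') \<ominus> (g \<oplus> g') = (f \<ominus> g) \<oplus> (f' \<ominus> g')"
    "c \<cdot> f \<ominus> c \<cdot> g = c \<cdot> (f \<ominus> g)" "g \<ominus> f = (-1) \<cdot> (f \<ominus> g)"
    "f \<ominus> h = (f \<ominus> g) \<oplus> (g \<ominus> h)"
    by (rule ext; simp add: fa_diff_def fa_add_def fa_scale_def algebra_simps)+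
  show "f \<ominus> f \<in> S" using S by (simp add: fa_subspace_def)
  show "f \<ominus> g \<in> S \<Longrightarrow> f' \<ominus> g' \<in> S \<Longrightarrow> (f \<oplus> f') \<ominus> (g \<oplus> g') \<in> S"
    "f \<ominus> g \<in> S \<Longrightarrow> c \<cdot> f \<ominus> c \<cdot> g \<in> S" "f \<ominus> g \<in> S \<Longrightarrow> g \<ominus> f \<in> S"
    "f \<ominus> g \<in> S \<Longrightarrow> g \<ominus> h \<in> S \<Longrightarrow> f \<ominus> h \<in> S"
    using S unfolding eqs fa_subspace_def by blast+
qed

lemma cong_diff: "f \<ominus> g \<in> S \<Longrightarrow> f' \<ominus> g' \<in> S \<Longrightarrow> (f \<ominus> f') \<ominus> (g \<ominus> g') \<in> S"
  unfolding fa_diff_eq_add[of f f'] fa_diff_eq_add[of g g'] by (intro cong_add cong_scale)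

lemma cong_sum: "finite T \<Longrightarrow> (\<And>t. t \<in> T \<Longrightarrow> F t \<ominus> G t \<in> S) \<Longrightarrow> fa_sum T F \<ominus> fa_sum T G \<in> S"
  unfolding fa_sum_diff[symmetric] by (rule subspace_sum)

end

locale rectangle =
  fixes m n l :: nat and par :: "nat \<Rightarrow> bool"
begin

definition cong_J :: "fa \<Rightarrow> fa \<Rightarrow> bool" (infix "\<equiv>\<^sub>J" 50) where
  "f \<equiv>\<^sub>J g \<longleftrightarrow> f \<ominus> g \<in> Jideal m n l par"

definition cong_I :: "fa \<Rightarrow> fa \<Rightarrow> bool" (infix "\<equiv>\<^sub>I" 50) where
  "f \<equiv>\<^sub>I g \<longleftrightarrow> f \<ominus> g \<in> Ichi m n l par"

lemmas cong_J_refl = cong_refl[OF subspace_Jideal[of m n l par], folded cong_J_def]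
  and cong_J_add = cong_add[OF subspace_Jideal[of m n l par], folded cong_J_def]
  and cong_J_scale = cong_scale[OF subspace_Jideal[of m n l par], folded cong_J_def]
  and cong_J_sym = cong_sym[OF subspace_Jideal[of m n l par], folded cong_J_def]
  and cong_J_trans [trans] = cong_trans[OF subspace_Jideal[of m n l par], folded cong_J_def]
  and cong_I_refl = cong_refl[OF subspace_Ichi[of m n l par], folded cong_I_def]
  and cong_I_add = cong_add[OF subspace_Ichi[of m n l par], folded cong_I_def]
  and cong_I_scale = cong_scale[OF subspace_Ichi[of m n l par], folded cong_I_def]
  and cong_I_diff = cong_diff[OF subspace_Ichi[of m n l par], folded cong_I_def]
  and cong_I_sum = cong_sum[OF subspace_Ichi[of m n l par], folded cong_I_def]
  and cong_I_trans [trans] = cong_trans[OF subspace_Ichi[of m n l par], folded cong_I_def]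

lemma cong_J_eq_trans [trans]: "f = g \<Longrightarrow> g \<equiv>\<^sub>J h \<Longrightarrow> f \<equiv>\<^sub>J h"
  and cong_I_eq_trans [trans]: "f = g \<Longrightarrow> g \<equiv>\<^sub>I h \<Longrightarrow> f \<equiv>\<^sub>I h"
  and cong_I_trans_eq [trans]: "f \<equiv>\<^sub>I g \<Longrightarrow> g = h \<Longrightarrow> f \<equiv>\<^sub>I h"
  by simp_all

lemma cong_J_imp_cong_I: "f \<equiv>\<^sub>J g \<Longrightarrow> f \<equiv>\<^sub>I g"
  unfolding cong_J_def cong_I_def by (rule I_J)

lemma cong_J_mult_left: "f \<equiv>\<^sub>J g \<Longrightarrow> u \<in> FA m n l \<Longrightarrow> u \<odot> f \<equiv>\<^sub>J u \<odot> g"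
  and cong_J_mult_right: "f \<equiv>\<^sub>J g \<Longrightarrow> u \<in> FA m n l \<Longrightarrow> f \<odot> u \<equiv>\<^sub>J g \<odot> u"
  and cong_I_mult_left: "f \<equiv>\<^sub>I g \<Longrightarrow> u \<in> FA m n l \<Longrightarrow> u \<odot> f \<equiv>\<^sub>I u \<odot> g"
  unfolding cong_J_def cong_I_def
  by (simp_all add: fa_mult_diff_right[symmetric] fa_mult_diff_left[symmetric] J_left J_right I_left)

end

lemma row_pair [simp]: "row (a, b) = a" and col_pair [simp]: "col (a, b) = b"
  by (simp_all add: row_def col_def)

lemma boxes_iff [simp]: "(a, b) \<in> boxes m n l \<longleftrightarrow> a \<in> {1..m+n} \<and> b \<in> {1..l}"
  by (simp add: boxes_def)

lemma finite_boxes [simp]: "finite (boxes m n l)"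
  by (simp add: boxes_def)

lemma finite_gens [simp]: "finite (gens m n l)"
  by (simp add: gens_def)

lemma finite_pgens [simp]: "finite (pgens m n l)" and finite_mgens [simp]: "finite (mgens m n l)"
  by (simp_all add: pgens_def mgens_def)

definition col_sign :: "gen \<Rightarrow> complex" where
  "col_sign g = (-1) ^ nat \<bar>int (col (snd g)) - int (col (fst g))\<bar>"

lemma col_sign_square [simp]: "col_sign g * col_sign g = 1" "col_sign g * (col_sign g * z) = z"
  unfolding col_sign_def by (simp_all add: power_mult_distrib[symmetric] mult.assoc[symmetric])

lemma col_sign_same_col: "col (fst g) = col (snd g) \<Longrightarrow> col_sign g = 1"
  by (simp add: col_sign_def)

lemma col_sign_eq_power: "col (fst g) \<le> col (snd g) \<Longrightarrow> col_sign g = (-1) ^ (col (snd g) - col (fst g))"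
proof -
  assume "col (fst g) \<le> col (snd g)"
  then have "int (col (snd g)) - int (col (fst g)) = int (col (snd g) - col (fst g))" by simp
  then show ?thesis unfolding col_sign_def by (simp only: abs_of_nat nat_int)
qed

lemma gpar_same_row: "row (fst y) = row (snd y) \<Longrightarrow> \<not> gpar par y"
  by (simp add: gpar_def bpar_def)

lemma col_sign_succ_left: "col a' = Suc (col a) \<Longrightarrow> col a' \<le> col b \<Longrightarrow> col_sign (a, b) = - col_sign (a', b)"
  by (simp add: col_sign_eq_power Suc_diff_Suc[symmetric])

lemma col_sign_succ_right: "col b' = Suc (col b) \<Longrightarrow> col a \<le> col b \<Longrightarrow> col_sign (a, b') = - col_sign (a, b)"
  by (simp add: col_sign_eq_power Suc_diff_le)

lemma sgn1_square [simp]: "sgn1 b * sgn1 b = 1" "sgn1 b * (sgn1 b * z) = z"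
  by (simp_all add: sgn1_def)

lemma sgn2_swap_sgn1: "sgn2 (a \<noteq> b) (b \<noteq> a) * sgn1 b = sgn1 a"
  by (simp add: sgn1_def sgn2_def)

lemma sum_sgn1_rows:
  assumes "card {k \<in> {1..m+n}. par k} = n"
  shows "(\<Sum>K\<in>{1..m+n}. sgn1 (par K)) = of_nat m - of_nat n"
proof -
  have "(\<Sum>K\<in>{1..m+n}. sgn1 (par K)) = (\<Sum>K\<in>{1..m+n}. 1 - 2 * (if par K then 1 else 0 :: complex))"
    by (rule sum.cong) (auto simp: sgn1_def)
  also have "\<dots> = of_nat (m + n) - 2 * of_nat (card {k \<in> {1..m+n}. par k})"
    by (simp add: sum_subtractf sum_distrib_left[symmetric] sum.If_cases Int_def conj_commute)
  finally show ?thesis using assms by simp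
qed

lemma rho_succ: "(of_int (rho m n l c) :: complex) - of_int (rho m n l (Suc c)) = - (of_nat m - of_nat n)"
proof -
  have "rho m n l c - rho m n l (Suc c) = - (int m - int n)" unfolding rho_def by (simp add: algebra_simps)
  then have "(of_int (rho m n l c - rho m n l (Suc c)) :: complex) = of_int (- (int m - int n))" by simp
  then show ?thesis by simp
qed

lemma chi_eq:
  assumes "g \<in> gens m n l"
  shows "chi m n l par g = (if row (fst g) = row (snd g) \<and> col (fst g) = col (snd g) + 1
                            then sgn1 (bpar par (fst g)) else 0)"
proof -
  obtain a b where g: "g = (a, b)" by (cases g)
  have ab: "a \<in> boxes m n l" "b \<in> boxes m n l" using assms g by (auto simp: gens_def)
  have diag: "mmult (boxes m n l) (munit g) (emat m n l) a' a' = (if a' = a then emat m n l b a else 0)"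
    if "a' \<in> boxes m n l" for a'
  proof -
    have "mmult (boxes m n l) (munit g) (emat m n l) a' a' =
          (\<Sum>b'\<in>boxes m n l. if b' = b then (if a' = a then emat m n l b a' else 0) else 0)"
      unfolding mmult_def munit_def g by (rule sum.cong) auto
    also have "\<dots> = (if a' = a then emat m n l b a else 0)" using ab by simp
    finally show ?thesis .
  qed
  have "chi m n l par g = (\<Sum>a'\<in>boxes m n l. if a' = a then sgn1 (bpar par a) * emat m n l b a else 0)"
    unfolding chi_def str_def by (rule sum.cong) (auto simp: diag)
  then show ?thesis using ab unfolding g emat_def by auto
qed

lemma chi_nonzero_same_row: "g \<in> gens m n l \<Longrightarrow> chi m n l par g \<noteq> 0 \<Longrightarrow> row (fst g) = row (snd g)"
  by (auto simp: chi_eq split: if_splits)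

section \<open>Products of the elements \<open>\<tilde>e\<close> and the super Leibniz rule\<close>

context rectangle
begin

abbreviation "G \<equiv> gens m n l"
abbreviation "Gm \<equiv> mgens m n l"
abbreviation "Gp \<equiv> pgens m n l"
abbreviation "et \<equiv> etilde m n l par"
abbreviation "\<chi> \<equiv> chi m n l par"

definition shift :: "gen \<Rightarrow> complex" where
  "shift g = (if fst g = snd g then sgn1 (bpar par (fst g)) * of_int (rho m n l (col (fst g))) else 0)"

lemma etilde_eq: "et g = col_sign g \<cdot> (fa_gen g \<oplus> shift g \<cdot> fa_one)"
  unfolding etilde_def col_sign_def shift_def by simp

lemma gen_eq_etilde: "fa_gen g = col_sign g \<cdot> et g \<oplus> (- shift g) \<cdot> fa_one"
  unfolding etilde_eq
  by (rule ext) (simp add: fa_add_def fa_scale_def distrib_left mult.assoc[symmetric])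

lemma shift_off_diagonal: "fst g \<noteq> snd g \<Longrightarrow> shift g = 0"
  by (simp add: shift_def)

definition eprod :: "gen list \<Rightarrow> fa" where
  "eprod ps = fa_prod (map et ps)"

lemma eprod_Nil [simp]: "eprod [] = fa_one"
  and eprod_Cons: "eprod (g # ps) = et g \<odot> eprod ps"
  by (simp_all add: eprod_def fa_prod_def)

lemma eprod_append: "eprod (xs @ ys) = eprod xs \<odot> eprod ys"
  by (induction xs) (simp_all add: eprod_Cons fa_mult_assoc)

lemma etilde_FA: "g \<in> G \<Longrightarrow> et g \<in> FA m n l"
  unfolding etilde_eq by (intro FA_scale FA_add FA_gen FA_one)

lemma eprod_FA: "set ps \<subseteq> G \<Longrightarrow> eprod ps \<in> FA m n l"
  by (induction ps) (simp_all add: eprod_Cons FA_one FA_mult etilde_FA)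

lemma eprod_supported_on: "set ps \<subseteq> Gp \<Longrightarrow> supported_on Gp (eprod ps)"
  by (induction ps)
    (auto simp: eprod_Cons etilde_eq intro!: supported_on_mult supported_on_scale
      supported_on_add supported_on_gen supported_on_one)

definition comm_sign :: "gen \<Rightarrow> gen \<Rightarrow> complex" where
  "comm_sign y g = sgn2 (gpar par y) (gpar par g)"

definition koszul_sign :: "gen \<Rightarrow> gen list \<Rightarrow> complex" where
  "koszul_sign y ps = (\<Prod>h\<leftarrow>ps. comm_sign y h)"

lemma koszul_sign_Nil [simp]: "koszul_sign y [] = 1"
  and koszul_sign_Cons: "koszul_sign y (g # ps) = comm_sign y g * koszul_sign y ps"
  and koszul_sign_append: "koszul_sign y (xs @ ys) = koszul_sign y xs * koszul_sign y ys"
  by (simp_all add: koszul_sign_def)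

lemma koszul_sign_even: "\<not> gpar par y \<Longrightarrow> koszul_sign y ps = 1"
  by (induction ps) (simp_all add: koszul_sign_Cons comm_sign_def sgn2_def)

text \<open>The supercommutator \<open>[e\<^sub>y, \<tilde>e\<^sub>g]\<close>; the shift in \<open>\<tilde>e\<^sub>g\<close> is central and drops out.\<close>

definition br_etilde :: "gen \<Rightarrow> gen \<Rightarrow> fa" where
  "br_etilde y g = col_sign g \<cdot> gl_br par y g"

lemma br_etilde_zero: "snd y \<noteq> fst g \<Longrightarrow> snd g \<noteq> fst y \<Longrightarrow> br_etilde y g = fa_zero"
  unfolding br_etilde_def gl_br_def by (rule ext) (simp add: fa_diff_def fa_scale_def fa_zero_def)

lemma gen_etilde_comm:
  assumes "y \<in> G" "g \<in> G"
  shows "fa_gen y \<odot> et g \<equiv>\<^sub>J comm_sign y g \<cdot> (et g \<odot> fa_gen y) \<oplus> br_etilde y g"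
proof -
  define s where "s = comm_sign y g"
  define d where "d = shift g"
  have shift_even: "d * (1 - s) = 0"
    by (simp add: d_def s_def shift_def comm_sign_def gpar_def sgn2_def)
  have et: "et g = col_sign g \<cdot> (fa_gen g \<oplus> d \<cdot> fa_one)"
    unfolding d_def by (rule etilde_eq)
  have left: "fa_gen y \<odot> et g = col_sign g \<cdot> (fa_gen y \<odot> fa_gen g \<oplus> d \<cdot> fa_gen y)"
    unfolding et by (simp add: fa_mult_scale_right fa_mult_add_right)
  have right: "et g \<odot> fa_gen y = col_sign g \<cdot> (fa_gen g \<odot> fa_gen y \<oplus> d \<cdot> fa_gen y)"
    unfolding et by (simp add: fa_mult_scale_left fa_mult_add_left)
  have "fa_gen y \<odot> et g \<ominus> (s \<cdot> (et g \<odot> fa_gen y) \<oplus> br_etilde y g) = col_sign g \<cdot> Urel par y g"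
    unfolding left right br_etilde_def Urel_def fa_sbr_def s_def[symmetric] comm_sign_def[symmetric]
  proof
    fix w
    have "d * (1 - s) * fa_gen y w = 0" using shift_even by simp
    then show "(col_sign g \<cdot> (fa_gen y \<odot> fa_gen g \<oplus> d \<cdot> fa_gen y) \<ominus>
        (s \<cdot> col_sign g \<cdot> (fa_gen g \<odot> fa_gen y \<oplus> d \<cdot> fa_gen y) \<oplus> col_sign g \<cdot> gl_br par y g)) w =
      (col_sign g \<cdot> (fa_gen y \<odot> fa_gen g \<ominus> s \<cdot> (fa_gen g \<odot> fa_gen y) \<ominus> gl_br par y g)) w"
      by (simp add: fa_diff_def fa_add_def fa_scale_def algebra_simps) blast
  qed
  then show ?thesis unfolding s_def cong_J_def by (simp add: J_scale J_rel assms)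
qed

fun br_eprod :: "gen \<Rightarrow> gen list \<Rightarrow> fa" where
  "br_eprod y [] = fa_zero"
| "br_eprod y (g # ps) = br_etilde y g \<odot> eprod ps \<oplus> comm_sign y g \<cdot> (et g \<odot> br_eprod y ps)"

lemma gen_eprod_comm:
  assumes "y \<in> G" "set ps \<subseteq> G"
  shows "fa_gen y \<odot> eprod ps \<equiv>\<^sub>J br_eprod y ps \<oplus> koszul_sign y ps \<cdot> (eprod ps \<odot> fa_gen y)"
  using assms(2)
proof (induction ps)
  case Nil
  then show ?case by (simp add: cong_J_refl)
next
  case (Cons g ps)
  define s where "s = comm_sign y g"
  have g: "g \<in> G" and ps: "set ps \<subseteq> G" using Cons.prems by auto
  have "fa_gen y \<odot> eprod (g # ps) = fa_gen y \<odot> et g \<odot> eprod ps"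
    by (simp add: eprod_Cons fa_mult_assoc)
  also have "\<dots> \<equiv>\<^sub>J (s \<cdot> (et g \<odot> fa_gen y) \<oplus> br_etilde y g) \<odot> eprod ps"
    by (rule cong_J_mult_right[OF gen_etilde_comm[OF assms(1) g, folded s_def] eprod_FA[OF ps]])
  also have "\<dots> = s \<cdot> (et g \<odot> (fa_gen y \<odot> eprod ps)) \<oplus> br_etilde y g \<odot> eprod ps"
    by (simp add: fa_mult_add_left fa_mult_scale_left fa_mult_assoc)
  also have "\<dots> \<equiv>\<^sub>J s \<cdot> (et g \<odot> (br_eprod y ps \<oplus> koszul_sign y ps \<cdot> (eprod ps \<odot> fa_gen y)))
      \<oplus> br_etilde y g \<odot> eprod ps"
    by (intro cong_J_add cong_J_scale cong_J_mult_left Cons.IH ps etilde_FA g cong_J_refl)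
  also have "\<dots> = br_eprod y (g # ps) \<oplus> koszul_sign y (g # ps) \<cdot> (eprod (g # ps) \<odot> fa_gen y)"
    by (simp add: fa_mult_add_right fa_mult_scale_right s_def koszul_sign_Cons eprod_Cons fa_mult_assoc)
      (rule ext, simp add: fa_add_def fa_scale_def algebra_simps)
  finally show ?case .
qed

definition positions :: "gen list \<Rightarrow> (gen list \<times> gen \<times> gen list) set" where
  "positions ps = {(pre, g, suf). pre @ g # suf = ps}"

lemma positions_Nil: "positions [] = {}"
  by (simp add: positions_def)

lemma positions_Cons:
  "positions (g # ps) = insert ([], g, ps) ((\<lambda>(pre, h, suf). (g # pre, h, suf)) ` positions ps)"
  unfolding positions_def by (auto simp: image_iff append_eq_Cons_conv)

lemma finite_positions [simp]: "finite (positions ps)"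
  by (induction ps) (simp_all add: positions_Nil positions_Cons)

lemma br_eprod_eq_sum: "br_eprod y ps = fa_sum (positions ps)
   (\<lambda>(pre, g, suf). koszul_sign y pre \<cdot> (eprod pre \<odot> (br_etilde y g \<odot> eprod suf)))"
proof (induction ps)
  case Nil
  then show ?case by (rule ext) (simp add: positions_Nil fa_sum_def fa_zero_def)
next
  case (Cons g ps)
  define F where "F = (\<lambda>(pre, h, suf). koszul_sign y pre \<cdot> (eprod pre \<odot> (br_etilde y h \<odot> eprod suf)))"
  define sh where "sh = (\<lambda>(pre, h :: gen, suf :: gen list). (g # pre, h, suf))"
  have "([], g, ps) \<notin> sh ` positions ps" by (auto simp: sh_def)
  moreover have "inj_on sh (positions ps)" by (rule inj_onI) (auto simp: sh_def)
  moreover have "comm_sign y g \<cdot> (et g \<odot> fa_sum (positions ps) F) = fa_sum (positions ps) (\<lambda>\<tau>. F (sh \<tau>))"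
    unfolding fa_mult_sum_right[OF finite_positions] fa_scale_sum
    by (rule fa_sum_cong)
      (auto simp: F_def sh_def eprod_Cons koszul_sign_Cons fa_mult_scale_right fa_mult_assoc)
  ultimately show ?case
    using Cons.IH unfolding F_def[symmetric] positions_Cons sh_def[symmetric]
    by (simp add: fa_sum_insert fa_sum_reindex) (simp add: F_def)
qed

lemma mgen_gen: "y \<in> Gm \<Longrightarrow> y \<in> G"
  by (simp add: mgens_def)

lemma cong_I_mult_mgen: "y \<in> Gm \<Longrightarrow> u \<in> FA m n l \<Longrightarrow> u \<odot> fa_gen y \<equiv>\<^sub>I \<chi> y \<cdot> u"
  unfolding cong_I_def using I_gen[of y m n l u par]
  by (simp add: fa_mult_diff_right fa_mult_scale_right)

lemma br_eprod_zero: "(\<And>h. h \<in> set ps \<Longrightarrow> br_etilde y h = fa_zero) \<Longrightarrow> br_eprod y ps = fa_zero"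
  by (induction ps) auto

lemma mgen_eprod_cong:
  assumes "y \<in> Gm" "set ps \<subseteq> G"
  shows "fa_gen y \<odot> eprod ps \<equiv>\<^sub>I br_eprod y ps \<oplus> (koszul_sign y ps * \<chi> y) \<cdot> eprod ps"
proof -
  have "fa_gen y \<odot> eprod ps \<equiv>\<^sub>I br_eprod y ps \<oplus> koszul_sign y ps \<cdot> (eprod ps \<odot> fa_gen y)"
    using assms by (intro cong_J_imp_cong_I gen_eprod_comm mgen_gen)
  also have "\<dots> \<equiv>\<^sub>I br_eprod y ps \<oplus> koszul_sign y ps \<cdot> \<chi> y \<cdot> eprod ps"
    by (intro cong_I_add cong_I_refl cong_I_scale cong_I_mult_mgen assms eprod_FA)
  finally show ?thesis by simp
qed

lemma mgen_eprod_commuting: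
  assumes "y \<in> Gm" "set ps \<subseteq> G" "\<And>h. h \<in> set ps \<Longrightarrow> br_etilde y h = fa_zero"
  shows "fa_gen y \<odot> eprod ps \<equiv>\<^sub>I (koszul_sign y ps * \<chi> y) \<cdot> eprod ps"
  using mgen_eprod_cong[OF assms(1,2)] br_eprod_zero[OF assms(3)] by simp

definition links :: "gen \<Rightarrow> gen \<Rightarrow> bool" where
  "links g h \<longleftrightarrow> col (snd g) < col (fst h) \<and> row (snd g) = row (fst h)"

fun chained :: "gen list \<Rightarrow> bool" where
  "chained [] = True"
| "chained [g] = True"
| "chained (g # h # ps) \<longleftrightarrow> links g h \<and> chained (h # ps)"

lemma chained_iff_nth: "chained ps \<longleftrightarrow> (\<forall>k. k + 1 < length ps \<longrightarrow> links (ps ! k) (ps ! (k + 1)))"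
proof (induction ps rule: chained.induct)
  case (3 g h ps)
  show ?case
  proof
    assume "chained (g # h # ps)"
    then have "links g h" "\<forall>k. k + 1 < length (h # ps) \<longrightarrow> links ((h # ps) ! k) ((h # ps) ! (k + 1))"
      using 3 by auto
    then show "\<forall>k. k + 1 < length (g # h # ps) \<longrightarrow> links ((g # h # ps) ! k) ((g # h # ps) ! (k + 1))"
      by (auto simp: less_Suc_eq_0_disj)
  next
    assume links: "\<forall>k. k + 1 < length (g # h # ps) \<longrightarrow> links ((g # h # ps) ! k) ((g # h # ps) ! (k + 1))"
    have "\<forall>k. k + 1 < length (h # ps) \<longrightarrow> links ((h # ps) ! k) ((h # ps) ! (k + 1))"
      using links[rule_format, of "Suc _"] by simp
    moreover have "links g h" using links[rule_format, of 0] by simp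
    ultimately show "chained (g # h # ps)" using 3 by simp
  qed
qed auto

lemma chained_append:
  "chained (xs @ ys) \<longleftrightarrow> chained xs \<and> chained ys \<and> (xs \<noteq> [] \<and> ys \<noteq> [] \<longrightarrow> links (last xs) (hd ys))"
proof (induction xs rule: chained.induct)
  case (2 g)
  then show ?case by (cases ys) auto
qed auto

lemma chained_Cons: "chained (g # ys) \<longleftrightarrow> chained ys \<and> (ys \<noteq> [] \<longrightarrow> links g (hd ys))"
  by (cases ys) auto

definition weight :: "gen list \<Rightarrow> nat" where
  "weight ps = (\<Sum>g\<leftarrow>ps. col (snd g) - col (fst g) + 1)"

lemma weight_Nil [simp]: "weight [] = 0"
  and weight_Cons: "weight (g # ps) = col (snd g) - col (fst g) + 1 + weight ps"
  and weight_append: "weight (xs @ ys) = weight xs + weight ys"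
  by (simp_all add: weight_def)

lemma length_le_weight: "length ps \<le> weight ps"
  by (induction ps) (auto simp: weight_Cons)

definition admissible :: "nat \<Rightarrow> nat \<Rightarrow> gen list \<Rightarrow> bool" where
  "admissible i j ps \<longleftrightarrow> ps \<noteq> [] \<and> set ps \<subseteq> Gp \<and> chained ps
     \<and> row (fst (hd ps)) = i \<and> row (snd (last ps)) = j"

definition adm_seqs :: "nat \<Rightarrow> nat \<Rightarrow> nat \<Rightarrow> gen list set" where
  "adm_seqs r i j = {ps. admissible i j ps \<and> weight ps = r}"

lemma finite_adm_seqs: "finite (adm_seqs r i j)"
proof -
  have "adm_seqs r i j \<subseteq> {xs. set xs \<subseteq> Gp \<and> length xs \<le> r}"
    unfolding adm_seqs_def admissible_def using length_le_weight by fastforce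
  then show ?thesis by (rule finite_subset) (simp add: finite_lists_length_le)
qed

lemma adm_seqs_gens: "ps \<in> adm_seqs r i j \<Longrightarrow> set ps \<subseteq> G"
  by (auto simp: adm_seqs_def admissible_def pgens_def)

lemma tseqs_eq_adm_seqs:
  assumes "1 \<le> s"
  shows "tseqs m n l r i j s = {ps \<in> adm_seqs r i j. length ps = s}"
proof (intro set_eqI iffI)
  fix ps
  assume ps: "ps \<in> tseqs m n l r i j s"
  then have len: "length ps = s" and ne: "ps \<noteq> []" using assms by (auto simp: tseqs_def)
  have "set ps \<subseteq> Gp" using ps len by (force simp: tseqs_def pgens_def in_set_conv_nth)
  moreover have "weight ps = r" using ps len
    by (simp add: tseqs_def weight_def sum_list_sum_nth atLeast0LessThan)
  moreover have "chained ps" using ps len by (simp add: tseqs_def chained_iff_nth links_def)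
  moreover have "row (fst (hd ps)) = i \<and> row (snd (last ps)) = j"
    using ps len ne assms by (simp add: tseqs_def hd_conv_nth last_conv_nth)
  ultimately show "ps \<in> {ps \<in> adm_seqs r i j. length ps = s}"
    using ne len by (simp add: adm_seqs_def admissible_def)
next
  fix ps
  assume "ps \<in> {ps \<in> adm_seqs r i j. length ps = s}"
  then have ps: "admissible i j ps" "weight ps = r" and len: "length ps = s"
    by (auto simp: adm_seqs_def)
  then have ne: "ps \<noteq> []" by (simp add: admissible_def)
  show "ps \<in> tseqs m n l r i j s"
    using ps len ne unfolding tseqs_def admissible_def chained_iff_nth links_def
    by (auto simp: pgens_def weight_def sum_list_sum_nth atLeast0LessThan hd_conv_nth last_conv_nth
        dest!: nth_mem)
qed

definition row_sign :: "gen list \<Rightarrow> complex" where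
  "row_sign ps = (\<Prod>g\<leftarrow>ps. sgn1 (bpar par (fst g)))"

lemma row_sign_Nil [simp]: "row_sign [] = 1"
  and row_sign_Cons: "row_sign (g # ys) = sgn1 (bpar par (fst g)) * row_sign ys"
  and row_sign_append: "row_sign (xs @ ys) = row_sign xs * row_sign ys"
  by (simp_all add: row_sign_def)

lemma tT_eq_sum_adm_seqs:
  assumes "1 \<le> r"
  shows "tT m n l par r i j = fa_sum (adm_seqs r i j) (\<lambda>ps. row_sign ps \<cdot> eprod ps)"
proof
  fix w
  have "tT m n l par r i j w = (\<Sum>s\<in>{1..r}. \<Sum>ps\<in>{ps \<in> adm_seqs r i j. length ps = s}. tterm m n l par ps w)"
    using assms unfolding tT_def fa_sum_def by (simp add: tseqs_eq_adm_seqs)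
  also have "\<dots> = (\<Sum>ps\<in>adm_seqs r i j. tterm m n l par ps w)"
    by (rule sum.group[OF finite_adm_seqs finite_atLeastAtMost])
      (use length_le_weight in \<open>fastforce simp: adm_seqs_def admissible_def Suc_le_eq\<close>)
  finally show "tT m n l par r i j w = fa_sum (adm_seqs r i j) (\<lambda>ps. row_sign ps \<cdot> eprod ps) w"
    by (simp add: fa_sum_def tterm_def row_sign_def eprod_def)
qed

lemma tT_FA: "tT m n l par r i j \<in> FA m n l"
proof (cases "r = 0")
  case True
  then show ?thesis by (simp add: tT_def FA_one FA_iff finite_support_zero supported_on_zero
        finite_support_one supported_on_one)
next
  case False
  then show ?thesis
    by (simp add: tT_eq_sum_adm_seqs FA_sum finite_adm_seqs FA_scale eprod_FA adm_seqs_gens)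
qed

lemma tT_supported_on_pgens: "supported_on Gp (tT m n l par r i j)"
proof (cases "r = 0")
  case True
  then show ?thesis by (simp add: tT_def supported_on_one supported_on_zero)
next
  case False
  then show ?thesis
    by (auto simp: tT_eq_sum_adm_seqs adm_seqs_def admissible_def
        intro!: supported_on_sum supported_on_scale eprod_supported_on)
qed

definition adm_prefix :: "nat \<Rightarrow> gen list \<Rightarrow> nat \<Rightarrow> nat \<Rightarrow> bool" where
  "adm_prefix i pre k c0 \<longleftrightarrow> (pre = [] \<and> k = i) \<or> (pre \<noteq> [] \<and> set pre \<subseteq> Gp \<and> chained pre
     \<and> row (fst (hd pre)) = i \<and> row (snd (last pre)) = k \<and> col (snd (last pre)) < c0)"

definition adm_suffix :: "nat \<Rightarrow> gen list \<Rightarrow> nat \<Rightarrow> nat \<Rightarrow> bool" where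
  "adm_suffix j suf k c0 \<longleftrightarrow> (suf = [] \<and> k = j) \<or> (suf \<noteq> [] \<and> set suf \<subseteq> Gp \<and> chained suf
     \<and> row (fst (hd suf)) = k \<and> c0 < col (fst (hd suf)) \<and> row (snd (last suf)) = j)"

lemma admissible_split: "admissible i j (pre @ g # suf) \<longleftrightarrow>
   g \<in> Gp \<and> adm_prefix i pre (row (fst g)) (col (fst g)) \<and> adm_suffix j suf (row (snd g)) (col (snd g))"
  unfolding admissible_def adm_prefix_def adm_suffix_def
  by (cases "pre = []"; cases "suf = []") (auto simp: chained_append chained_Cons links_def)

lemma adm_prefix_Nil [simp]: "adm_prefix i [] k c0 \<longleftrightarrow> k = i"
  and adm_suffix_Nil [simp]: "adm_suffix j [] k c0 \<longleftrightarrow> k = j"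
  by (simp_all add: adm_prefix_def adm_suffix_def)

lemma adm_prefix_snoc: "adm_prefix i (pre @ [g]) k c0 \<longleftrightarrow>
   g \<in> Gp \<and> adm_prefix i pre (row (fst g)) (col (fst g)) \<and> row (snd g) = k \<and> col (snd g) < c0"
  unfolding adm_prefix_def by (cases "pre = []") (auto simp: chained_append links_def)

lemma adm_suffix_Cons: "adm_suffix j (h # suf) k c0 \<longleftrightarrow>
   h \<in> Gp \<and> row (fst h) = k \<and> c0 < col (fst h) \<and> adm_suffix j suf (row (snd h)) (col (snd h))"
  unfolding adm_suffix_def by (cases "suf = []") (auto simp: chained_Cons links_def)

lemma adm_prefix_pgens: "adm_prefix i pre k c0 \<Longrightarrow> set pre \<subseteq> Gp"
  and adm_suffix_pgens: "adm_suffix j suf k c0 \<Longrightarrow> set suf \<subseteq> Gp"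
  unfolding adm_prefix_def adm_suffix_def by auto

lemma pgen_col_le: "g \<in> Gp \<Longrightarrow> col (fst g) \<le> col (snd g)"
  and pgen_gen: "g \<in> Gp \<Longrightarrow> g \<in> G"
  by (simp_all add: pgens_def)

lemma pgen_pair_iff: "(a, b) \<in> Gp \<longleftrightarrow> a \<in> boxes m n l \<and> b \<in> boxes m n l \<and> col a \<le> col b"
  by (simp add: pgens_def gens_def)

lemma adm_suffix_cols: "adm_suffix j suf k c0 \<Longrightarrow> h \<in> set suf \<Longrightarrow> c0 < col (fst h) \<and> c0 < col (snd h)"
proof (induction suf arbitrary: k c0)
  case (Cons h' suf)
  then have "h' \<in> Gp" "c0 < col (fst h')" "adm_suffix j suf (row (snd h')) (col (snd h'))"
    by (auto simp: adm_suffix_Cons)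
  with Cons.IH[of "row (snd h')" "col (snd h')"] Cons.prems(2) pgen_col_le show ?case
    by (cases "h = h'") fastforce+
qed simp

lemma adm_suffix_gens: "adm_suffix j suf k c0 \<Longrightarrow> set suf \<subseteq> G"
  using adm_suffix_pgens pgen_gen by blast

lemma adjacent_mgen_eprod_disjoint:
  assumes A: "A \<in> {1..m+n}" and B: "B \<in> {1..m+n}" and c: "1 \<le> c" "Suc c \<le> l"
    and suf: "adm_suffix j suf k (Suc c)"
  shows "fa_gen ((A, Suc c), (B, c)) \<odot> eprod suf \<equiv>\<^sub>I (if A = B then sgn1 (par A) \<cdot> eprod suf else fa_zero)"
proof -
  define z where "z = ((A, Suc c), (B, c))"
  have z: "z \<in> Gm" using A B c by (simp add: z_def mgens_def gens_def boxes_def)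
  have "fa_gen z \<odot> eprod suf \<equiv>\<^sub>I (koszul_sign z suf * \<chi> z) \<cdot> eprod suf"
  proof (rule mgen_eprod_commuting[OF z adm_suffix_gens[OF suf]], rule br_etilde_zero)
    fix h assume "h \<in> set suf"
    from adm_suffix_cols[OF suf this] show "snd z \<noteq> fst h" "snd h \<noteq> fst z"
      by (auto simp: z_def col_def prod_eq_iff)
  qed
  moreover have "koszul_sign z suf * \<chi> z = (if A = B then sgn1 (par A) else 0)"
    using z koszul_sign_even[of z suf]
    by (auto simp: chi_eq mgen_gen z_def gpar_same_row bpar_def)
  ultimately show ?thesis by (auto simp: z_def)
qed

end

locale adjacent_mgen = rectangle +
  fixes P Q c :: nat
  assumes P: "P \<in> {1..m+n}" and Q: "Q \<in> {1..m+n}" and c_ge: "1 \<le> c" and c_less: "Suc c \<le> l"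
begin

abbreviation "p \<equiv> (P, Suc c)"
abbreviation "q \<equiv> (Q, c)"
abbreviation "x \<equiv> (p, q)"

lemma x_mgen: "x \<in> Gm"
  using P Q c_ge c_less by (simp add: mgens_def gens_def boxes_def)

lemma chi_x: "\<chi> x = (if P = Q then sgn1 (par P) else 0)"
  using x_mgen by (simp add: chi_eq mgen_gen bpar_def)

lemma koszul_chi_x: "koszul_sign x ps * \<chi> x = \<chi> x"
  by (cases "P = Q") (simp_all add: chi_x koszul_sign_even gpar_same_row)

lemma br_eprod_from_p_suffix:
  assumes K: "K \<in> {1..m+n}" and suf: "adm_suffix j (h # suf) K c"
  shows "br_eprod (p, (K, c)) (h # suf) \<equiv>\<^sub>I (if snd h = p then (- sgn1 (par P)) \<cdot> eprod suf else fa_zero)"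
proof -
  define y where "y = (p, (K, c))"
  have h: "h \<in> Gp" "row (fst h) = K" "c < col (fst h)"
    and suf': "adm_suffix j suf (row (snd h)) (col (snd h))"
    using suf by (auto simp: adm_suffix_Cons)
  have h_le: "col (fst h) \<le> col (snd h)" using pgen_col_le[OF h(1)] .
  have "br_eprod y suf = fa_zero"
  proof (rule br_eprod_zero, rule br_etilde_zero)
    fix h' assume "h' \<in> set suf"
    from adm_suffix_cols[OF suf' this] h h_le show "snd y \<noteq> fst h'" "snd h' \<noteq> fst y"
      by (auto simp: y_def col_def prod_eq_iff)
  qed
  then have br: "br_eprod y (h # suf) = br_etilde y h \<odot> eprod suf" by simp
  show ?thesis
  proof (cases "snd h = p")
    case False
    then have "br_etilde y h = fa_zero"
      using h by (intro br_etilde_zero) (auto simp: y_def col_def prod_eq_iff)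
    then show ?thesis using br False by (simp add: y_def cong_I_refl)
  next
    case True
    then have fst_h: "fst h = (K, Suc c)" using h h_le by (cases "fst h") auto
    define s where "s = sgn2 (par P \<noteq> par K) (par K \<noteq> par P)"
    have "br_etilde y h = (- s) \<cdot> fa_gen ((K, Suc c), (K, c))"
      unfolding br_etilde_def gl_br_def s_def using True fst_h
      by (intro ext)
        (auto simp: y_def col_sign_same_col fa_diff_def fa_scale_def fa_zero_def gpar_def bpar_def)
    then have "br_eprod y (h # suf) = (- s) \<cdot> (fa_gen ((K, Suc c), (K, c)) \<odot> eprod suf)"
      unfolding br by (simp add: fa_mult_scale_left)
    also have "\<dots> \<equiv>\<^sub>I (- s) \<cdot> sgn1 (par K) \<cdot> eprod suf"
      using adjacent_mgen_eprod_disjoint[OF K K c_ge c_less] suf' True by (intro cong_I_scale) simp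
    also have "(- s) \<cdot> sgn1 (par K) \<cdot> eprod suf = (- sgn1 (par P)) \<cdot> eprod suf"
      using sgn2_swap_sgn1[of "par P" "par K"] by (simp add: s_def)
    finally show ?thesis using True by (simp add: y_def)
  qed
qed

lemma mgen_from_p_eprod_suffix:
  assumes K: "K \<in> {1..m+n}" and suf: "adm_suffix j suf K c"
  shows "fa_gen (p, (K, c)) \<odot> eprod suf \<equiv>\<^sub>I
    (if K = P then sgn1 (par P) \<cdot> eprod suf else fa_zero)
    \<oplus> (case suf of [] \<Rightarrow> fa_zero
        | h # suf' \<Rightarrow> if snd h = p then (- sgn1 (par P)) \<cdot> eprod suf' else fa_zero)"
proof -
  define y where "y = (p, (K, c))"
  have y: "y \<in> Gm" using P K c_ge c_less by (simp add: y_def mgens_def gens_def boxes_def)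
  have suf_G: "set suf \<subseteq> G" using adm_suffix_gens[OF suf] .
  have "fa_gen y \<odot> eprod suf \<equiv>\<^sub>I br_eprod y suf \<oplus> (koszul_sign y suf * \<chi> y) \<cdot> eprod suf"
    by (rule mgen_eprod_cong[OF y suf_G])
  also have "(koszul_sign y suf * \<chi> y) \<cdot> eprod suf = (if K = P then sgn1 (par P) \<cdot> eprod suf else fa_zero)"
    using y koszul_sign_even[of y suf] by (auto simp: y_def chi_eq mgen_gen gpar_same_row bpar_def)
  also have "br_eprod y suf \<oplus> \<dots> \<equiv>\<^sub>I (case suf of [] \<Rightarrow> fa_zero
        | h # suf' \<Rightarrow> if snd h = p then (- sgn1 (par P)) \<cdot> eprod suf' else fa_zero) \<oplus> \<dots>"
  proof (intro cong_I_add cong_I_refl)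
    show "br_eprod y suf \<equiv>\<^sub>I (case suf of [] \<Rightarrow> fa_zero
        | h # suf' \<Rightarrow> if snd h = p then (- sgn1 (par P)) \<cdot> eprod suf' else fa_zero)"
    proof (cases suf)
      case Nil
      then show ?thesis by (simp add: cong_I_refl)
    next
      case (Cons h suf')
      show ?thesis
        unfolding Cons list.case y_def by (rule br_eprod_from_p_suffix[OF K suf[unfolded Cons]])
    qed
  qed
  finally show ?thesis by (simp add: y_def fa_add_commute)
qed

end

section \<open>Reduction of the brackets with an adjacent generator\<close>

text \<open>A marking \<open>(pre, g, suf)\<close> singles out one letter \<open>g\<close> of an admissible sequence; the super
  Leibniz rule produces one term per marking, and reducing the bracket of \<open>e\<^sub>x\<close> with the marked
  letter modulo \<open>I\<^sub>\<chi>\<close> yields terms of six kinds: the box \<open>q\<close> of the letter is replaced by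
  \<open>p\<close>, or its box \<open>p\<close> by \<open>q\<close>, or the letter is dropped, alone or together with the letter
  following it.\<close>

type_synonym marking = "gen list \<times> gen \<times> gen list"

locale adjacent_tseq = adjacent_mgen +
  fixes i j r :: nat
begin

lemma gen_between_eprod:
  "eprod pre \<odot> (fa_gen g \<odot> eprod suf)
     = col_sign g \<cdot> eprod (pre @ g # suf) \<oplus> (- shift g) \<cdot> eprod (pre @ suf)"
  by (subst gen_eq_etilde)
    (simp add: fa_mult_add_left fa_mult_add_right fa_mult_scale_left fa_mult_scale_right
      eprod_append eprod_Cons)

lemma admissible_parts:
  assumes "admissible i j (pre @ g # suf)"
  shows "g \<in> Gp" "adm_prefix i pre (row (fst g)) (col (fst g))"
    "adm_suffix j suf (row (snd g)) (col (snd g))" "eprod pre \<in> FA m n l"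
  using assms unfolding admissible_split
  by (auto intro!: eprod_FA dest!: adm_prefix_pgens dest: pgen_gen)

lemma left_term_reduce:
  assumes adm: "admissible i j (pre @ g # suf)"
  shows "eprod pre \<odot> ((if fst g = q then fa_gen (p, snd g) else fa_zero) \<odot> eprod suf) \<equiv>\<^sub>I
      (if fst g = q \<and> c < col (snd g) then col_sign (p, snd g) \<cdot> eprod (pre @ (p, snd g) # suf) else fa_zero)
    \<oplus> (if g = (q, (P, c)) then sgn1 (par P) \<cdot> eprod (pre @ suf) else fa_zero)
    \<oplus> (if fst g = q \<and> col (snd g) = c \<and> suf \<noteq> [] \<and> snd (hd suf) = p
         then (- sgn1 (par P)) \<cdot> eprod (pre @ tl suf) else fa_zero)
    \<oplus> (if g = (q, p) then (- shift (p, p)) \<cdot> eprod (pre @ suf) else fa_zero)"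
proof (cases "fst g = q")
  case False
  then show ?thesis by (auto simp: cong_I_refl)
next
  case True
  note parts = admissible_parts[OF adm]
  have "c \<le> col (snd g)" using pgen_col_le[OF parts(1)] True by simp
  then consider "c < col (snd g)" | K where "snd g = (K, c)"
    by (metis le_neq_implies_less col_pair surj_pair)
  then show ?thesis
  proof cases
    case 1
    have "shift (p, snd g) = (if snd g = p then shift (p, p) else 0)"
      by (simp add: shift_off_diagonal)
    then show ?thesis using True 1
      by (cases g) (auto simp: gen_between_eprod cong_I_refl)
  next
    case 2
    then have K: "K \<in> {1..m+n}" using parts(1) by (auto simp: pgens_def gens_def boxes_def)
    have g: "g = (q, (K, c))" using True 2 by (metis prod.collapse)
    have "eprod pre \<odot> (fa_gen (p, (K, c)) \<odot> eprod suf) \<equiv>\<^sub>I eprod pre \<odot>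
       ((if K = P then sgn1 (par P) \<cdot> eprod suf else fa_zero)
        \<oplus> (case suf of [] \<Rightarrow> fa_zero
            | h # suf' \<Rightarrow> if snd h = p then (- sgn1 (par P)) \<cdot> eprod suf' else fa_zero))"
      using parts(3,4) by (intro cong_I_mult_left mgen_from_p_eprod_suffix K) (simp add: 2)
    then show ?thesis
      by (cases suf) (auto simp: g fa_mult_add_right fa_mult_scale_right eprod_append)
  qed
qed

lemma right_term_reduce:
  assumes adm: "admissible i j (pre @ g # suf)"
  shows "eprod pre \<odot> ((if snd g = p then fa_gen (fst g, q) else fa_zero) \<odot> eprod suf) \<equiv>\<^sub>I
      (if snd g = p \<and> col (fst g) \<le> c then col_sign (fst g, q) \<cdot> eprod (pre @ (fst g, q) # suf) else fa_zero)
    \<oplus> (if g = ((Q, Suc c), p) then sgn1 (par Q) \<cdot> eprod (pre @ suf) else fa_zero)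
    \<oplus> (if g = (q, p) then (- shift (q, q)) \<cdot> eprod (pre @ suf) else fa_zero)"
proof (cases "snd g = p")
  case False
  then show ?thesis by (auto simp: cong_I_refl)
next
  case True
  note parts = admissible_parts[OF adm]
  have "col (fst g) \<le> Suc c" using pgen_col_le[OF parts(1)] True by simp
  then consider "col (fst g) \<le> c" | A where "fst g = (A, Suc c)"
    by (metis le_SucE col_pair surj_pair)
  then show ?thesis
  proof cases
    case 1
    have "shift (fst g, q) = (if fst g = q then shift (q, q) else 0)"
      by (simp add: shift_off_diagonal)
    then show ?thesis using True 1
      by (cases g) (auto simp: gen_between_eprod cong_I_refl)
  next
    case 2
    then have A: "A \<in> {1..m+n}" using parts(1) by (auto simp: pgens_def gens_def boxes_def)
    have g: "g = ((A, Suc c), p)" using True 2 by (metis prod.collapse)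
    have "eprod pre \<odot> (fa_gen ((A, Suc c), q) \<odot> eprod suf) \<equiv>\<^sub>I
        eprod pre \<odot> (if A = Q then sgn1 (par A) \<cdot> eprod suf else fa_zero)"
      using parts(3,4) True by (intro cong_I_mult_left adjacent_mgen_eprod_disjoint A Q c_ge c_less) simp_all
    then show ?thesis
      by (auto simp: g fa_mult_scale_right eprod_append)
  qed
qed

definition marked :: "marking set" where
  "marked = {(pre, g, suf). pre @ g # suf \<in> adm_seqs r i j}"

lemma finite_marked: "finite marked"
proof -
  have "marked \<subseteq> (\<Union>ps\<in>adm_seqs r i j. positions ps)" by (auto simp: marked_def positions_def)
  then show ?thesis by (rule finite_subset) (simp add: finite_adm_seqs)
qed

lemma marked_iff: "(pre, g, suf) \<in> marked \<longleftrightarrow> g \<in> Gp \<and> adm_prefix i pre (row (fst g)) (col (fst g))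
   \<and> adm_suffix j suf (row (snd g)) (col (snd g))
   \<and> weight pre + (col (snd g) - col (fst g) + 1) + weight suf = r"
  by (simp add: marked_def adm_seqs_def admissible_split weight_append weight_Cons add.assoc)

definition marking_coeff :: "gen list \<Rightarrow> gen \<Rightarrow> gen list \<Rightarrow> complex" where
  "marking_coeff pre g suf = row_sign (pre @ g # suf) * koszul_sign x pre * col_sign g"

definition bracket_term :: "marking \<Rightarrow> fa" where
  "bracket_term = (\<lambda>(pre, g, suf).
     (row_sign (pre @ g # suf) * koszul_sign x pre) \<cdot> (eprod pre \<odot> (br_etilde x g \<odot> eprod suf)))"

definition lift_left :: "marking \<Rightarrow> fa" where
  "lift_left = (\<lambda>(pre, g, suf). (marking_coeff pre g suf * col_sign (p, snd g)) \<cdot> eprod (pre @ (p, snd g) # suf))"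

definition drop_left :: "marking \<Rightarrow> fa" where
  "drop_left = (\<lambda>(pre, g, suf). (marking_coeff pre g suf * sgn1 (par P)) \<cdot> eprod (pre @ suf))"

definition drop_pair :: "marking \<Rightarrow> fa" where
  "drop_pair = (\<lambda>(pre, g, suf). (- marking_coeff pre g suf * sgn1 (par P)) \<cdot> eprod (pre @ tl suf))"

definition lift_right :: "marking \<Rightarrow> fa" where
  "lift_right = (\<lambda>(pre, g, suf).
     (- comm_sign x g * marking_coeff pre g suf * col_sign (fst g, q)) \<cdot> eprod (pre @ (fst g, q) # suf))"

definition drop_right :: "marking \<Rightarrow> fa" where
  "drop_right = (\<lambda>(pre, g, suf). (- comm_sign x g * marking_coeff pre g suf * sgn1 (par Q)) \<cdot> eprod (pre @ suf))"

definition drop_diag :: "marking \<Rightarrow> fa" where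
  "drop_diag = (\<lambda>(pre, g, suf).
     (marking_coeff pre g suf * (comm_sign x g * shift (q, q) - shift (p, p))) \<cdot> eprod (pre @ suf))"

definition "lift_left_dom = {(pre, g, suf) \<in> marked. fst g = q \<and> c < col (snd g)}"
definition "drop_left_dom = {(pre, g, suf) \<in> marked. g = (q, (P, c))}"
definition "drop_pair_dom =
  {(pre, g, suf) \<in> marked. fst g = q \<and> col (snd g) = c \<and> suf \<noteq> [] \<and> snd (hd suf) = p}"
definition "lift_right_dom = {(pre, g, suf) \<in> marked. snd g = p \<and> col (fst g) \<le> c}"
definition "drop_right_dom = {(pre, g, suf) \<in> marked. g = ((Q, Suc c), p)}"
definition "drop_diag_dom = {(pre, g, suf) \<in> marked. g = (q, p)}"

definition reduced :: "marking \<Rightarrow> fa" where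
  "reduced \<tau> = on_set lift_left_dom lift_left \<tau> \<oplus> on_set drop_left_dom drop_left \<tau>
     \<oplus> on_set drop_pair_dom drop_pair \<tau> \<oplus> on_set lift_right_dom lift_right \<tau>
     \<oplus> on_set drop_right_dom drop_right \<tau> \<oplus> on_set drop_diag_dom drop_diag \<tau>"

lemma bracket_term_reduce:
  assumes marked: "(pre, g, suf) \<in> marked"
  shows "bracket_term (pre, g, suf) \<equiv>\<^sub>I reduced (pre, g, suf)"
proof -
  define L where "L = (if fst g = q then fa_gen (p, snd g) else fa_zero)"
  define R where "R = (if snd g = p then fa_gen (fst g, q) else fa_zero)"
  define s where "s = comm_sign x g"
  have adm: "admissible i j (pre @ g # suf)" using marked by (simp add: marked_def adm_seqs_def)
  have "br_etilde x g = col_sign g \<cdot> (L \<ominus> s \<cdot> R)"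
    unfolding br_etilde_def gl_br_def L_def R_def s_def comm_sign_def by (simp add: eq_commute)
  then have "bracket_term (pre, g, suf)
      = marking_coeff pre g suf \<cdot> (eprod pre \<odot> (L \<odot> eprod suf) \<ominus> s \<cdot> (eprod pre \<odot> (R \<odot> eprod suf)))"
    by (simp add: bracket_term_def marking_coeff_def fa_mult_scale_left fa_mult_scale_right
        fa_mult_diff_left fa_mult_diff_right)
  also have "\<dots> \<equiv>\<^sub>I marking_coeff pre g suf \<cdot> (
      ((if fst g = q \<and> c < col (snd g) then col_sign (p, snd g) \<cdot> eprod (pre @ (p, snd g) # suf) else fa_zero)
    \<oplus> (if g = (q, (P, c)) then sgn1 (par P) \<cdot> eprod (pre @ suf) else fa_zero)
    \<oplus> (if fst g = q \<and> col (snd g) = c \<and> suf \<noteq> [] \<and> snd (hd suf) = p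
         then (- sgn1 (par P)) \<cdot> eprod (pre @ tl suf) else fa_zero)
    \<oplus> (if g = (q, p) then (- shift (p, p)) \<cdot> eprod (pre @ suf) else fa_zero))
    \<ominus> s \<cdot> ((if snd g = p \<and> col (fst g) \<le> c then col_sign (fst g, q) \<cdot> eprod (pre @ (fst g, q) # suf) else fa_zero)
    \<oplus> (if g = ((Q, Suc c), p) then sgn1 (par Q) \<cdot> eprod (pre @ suf) else fa_zero)
    \<oplus> (if g = (q, p) then (- shift (q, q)) \<cdot> eprod (pre @ suf) else fa_zero)))"
    unfolding L_def R_def
    by (intro cong_I_scale cong_I_diff left_term_reduce right_term_reduce adm)
  also have "\<dots> = reduced (pre, g, suf)"
    using marked
    by (auto simp: reduced_def on_set_def lift_left_def drop_left_def drop_pair_def lift_right_def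
        drop_right_def drop_diag_def lift_left_dom_def drop_left_dom_def drop_pair_dom_def
        lift_right_dom_def drop_right_dom_def drop_diag_dom_def s_def
        fa_add_def fa_diff_def fa_scale_def fa_zero_def algebra_simps fun_eq_iff)
  finally show ?thesis .
qed

lemma row_sign_split: "row_sign (pre @ g # suf) = row_sign pre * sgn1 (par (fst (fst g))) * row_sign suf"
  by (simp add: row_sign_append row_sign_Cons bpar_def row_def)

lemma comm_sign_x: "comm_sign x g = sgn2 (par P \<noteq> par Q) (par (fst (fst g)) \<noteq> par (fst (snd g)))"
  by (simp add: comm_sign_def gpar_def bpar_def row_def)

lemma rows_in_boxes: "K \<in> {1..m+n} \<Longrightarrow> (K, c) \<in> boxes m n l \<and> (K, Suc c) \<in> boxes m n l"
  using c_ge c_less by simp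

lemma pq_in_boxes: "p \<in> boxes m n l" "q \<in> boxes m n l"
  using rows_in_boxes P Q by auto

section \<open>Cancellation of the reduced terms\<close>

text \<open>The six families cancel in pairs: lifted left letters against dropped letters \<open>(q, (P, c))\<close>
  followed by a letter starting in column \<open>c + 1\<close>, lifted right letters against dropped letters
  \<open>((Q, c + 1), p)\<close> preceded by a letter ending in column \<open>c\<close>, the remaining dropped letters
  of both kinds against each other, and the dropped diagonal letters \<open>(q, p)\<close> against the
  dropped pairs, summed over the row of the pair.\<close>

definition "drop_left_linked = {(pre, g, suf) \<in> drop_left_dom. suf \<noteq> [] \<and> col (fst (hd suf)) = Suc c}"

lemma bij_lift_left:
  "bij_betw (\<lambda>(pre, g, suf). (pre, (q, (P, c)), (p, snd g) # suf)) lift_left_dom drop_left_linked"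
  (is "bij_betw ?f _ _")
proof -
  let ?g = "\<lambda>(pre, g, suf). (pre, (q, snd (hd suf)), tl suf)"
  show ?thesis
  proof (rule bij_betw_inverseI[where g = ?g])
    fix \<tau> assume "\<tau> \<in> lift_left_dom"
    then obtain pre b suf where \<tau>: "\<tau> = (pre, (q, b), suf)" and cb: "c < col b"
      and h: "(q, b) \<in> Gp" "adm_prefix i pre Q c" "adm_suffix j suf (row b) (col b)"
        "weight pre + (col b - c + 1) + weight suf = r"
      by (auto simp: lift_left_dom_def marked_iff)
    have "(p, b) \<in> Gp" "(q, (P, c)) \<in> Gp"
      using h(1) cb pq_in_boxes rows_in_boxes[OF P] by (auto simp: pgen_pair_iff)
    with h cb show "?f \<tau> \<in> drop_left_linked"
      by (simp add: \<tau> drop_left_linked_def drop_left_dom_def marked_iff adm_suffix_Cons weight_Cons)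
    show "?g (?f \<tau>) = \<tau>"
      by (simp add: \<tau>)
  next
    fix \<tau> assume "\<tau> \<in> drop_left_linked"
    then obtain pre h suf where \<tau>: "\<tau> = (pre, (q, (P, c)), h # suf)" and ch: "col (fst h) = Suc c"
      and hh: "adm_prefix i pre Q c" "h \<in> Gp" "row (fst h) = P"
        "adm_suffix j suf (row (snd h)) (col (snd h))" "weight pre + 1 + weight (h # suf) = r"
      by (auto simp: drop_left_linked_def drop_left_dom_def marked_iff adm_suffix_Cons neq_Nil_conv)
    have fh: "fst h = p" using hh(3) ch by (cases "fst h") simp
    have hc: "col (fst h) \<le> col (snd h)" using pgen_col_le[OF hh(2)] .
    have "(q, snd h) \<in> Gp" using hh(2) ch hc pq_in_boxes by (cases h) (simp add: pgen_pair_iff)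
    with hh ch hc show "?g \<tau> \<in> lift_left_dom"
      by (simp add: \<tau> lift_left_dom_def marked_iff weight_Cons)
    show "?f (?g \<tau>) = \<tau>"
      using fh by (cases h) (simp add: \<tau>)
  qed
qed

lemma lift_left_cancel: "fa_sum lift_left_dom lift_left \<oplus> fa_sum drop_left_linked drop_left = fa_zero"
proof (rule fa_sum_cancel_bij[OF bij_lift_left])
  fix \<tau> assume "\<tau> \<in> lift_left_dom"
  then obtain pre b suf where \<tau>: "\<tau> = (pre, (q, b), suf)" and cb: "c < col b"
    by (auto simp: lift_left_dom_def)
  have "col_sign (q, b) = - col_sign (p, b)" using cb by (intro col_sign_succ_left) simp_all
  then show "drop_left ((\<lambda>(pre, g, suf). (pre, (q, (P, c)), (p, snd g) # suf)) \<tau>) = (- 1) \<cdot> lift_left \<tau>"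
    by (simp add: \<tau> drop_left_def lift_left_def marking_coeff_def row_sign_split row_sign_Cons bpar_def
        col_sign_same_col mult_ac)
qed

definition "drop_right_linked = {(pre, g, suf) \<in> drop_right_dom. pre \<noteq> [] \<and> col (snd (last pre)) = c}"

lemma bij_lift_right:
  "bij_betw (\<lambda>(pre, g, suf). (pre @ [(fst g, q)], ((Q, Suc c), p), suf)) lift_right_dom drop_right_linked"
  (is "bij_betw ?f _ _")
proof -
  let ?g = "\<lambda>(pre, g, suf). (butlast pre, (fst (last pre), p), suf)"
  show ?thesis
  proof (rule bij_betw_inverseI[where g = ?g])
    fix \<tau> assume "\<tau> \<in> lift_right_dom"
    then obtain pre a suf where \<tau>: "\<tau> = (pre, (a, p), suf)" and ca: "col a \<le> c"
      and h: "(a, p) \<in> Gp" "adm_prefix i pre (row a) (col a)" "adm_suffix j suf P (Suc c)"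
        "weight pre + (Suc c - col a + 1) + weight suf = r"
      by (auto simp: lift_right_dom_def marked_iff)
    have "(a, q) \<in> Gp" "((Q, Suc c), p) \<in> Gp"
      using h(1) ca pq_in_boxes rows_in_boxes[OF Q] by (auto simp: pgen_pair_iff)
    with h ca show "?f \<tau> \<in> drop_right_linked"
      by (simp add: \<tau> drop_right_linked_def drop_right_dom_def marked_iff adm_prefix_snoc
          weight_append weight_Cons)
    show "?g
        (?f \<tau>) = \<tau>"
      by (simp add: \<tau>)
  next
    fix \<tau> assume "\<tau> \<in> drop_right_linked"
    then obtain pre h suf where \<tau>: "\<tau> = (pre @ [h], ((Q, Suc c), p), suf)" and ch: "col (snd h) = c"
      and hh: "h \<in> Gp" "adm_prefix i pre (row (fst h)) (col (fst h))" "row (snd h) = Q"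
        "adm_suffix j suf P (Suc c)" "weight (pre @ [h]) + 1 + weight suf = r"
      by (auto simp: drop_right_linked_def drop_right_dom_def marked_iff adm_prefix_snoc
          neq_Nil_conv[of "rev _", simplified] elim!: rev_cases[of "fst _"] split: prod.splits)
    have sh: "snd h = q" using hh(3) ch by (cases "snd h") simp
    have hc: "col (fst h) \<le> col (snd h)" using pgen_col_le[OF hh(1)] .
    have "(fst h, p) \<in> Gp" using hh(1) hc ch pq_in_boxes by (cases h) (simp add: pgen_pair_iff)
    with hh ch hc show "?g \<tau> \<in> lift_right_dom"
      by (simp add: \<tau> lift_right_dom_def marked_iff weight_append weight_Cons)
    show "?f
        (?g \<tau>) = \<tau>"
      using sh by (cases h) (simp add: \<tau>)
  qed
qed

lemma lift_right_cancel: "fa_sum lift_right_dom lift_right \<oplus> fa_sum drop_right_linked drop_right = fa_zero"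
proof (rule fa_sum_cancel_bij[OF bij_lift_right])
  fix \<tau> assume "\<tau> \<in> lift_right_dom"
  then obtain pre a suf where \<tau>: "\<tau> = (pre, (a, p), suf)" and ca: "col a \<le> c"
    by (auto simp: lift_right_dom_def)
  have col: "col_sign (a, p) = - col_sign (a, q)" using ca by (intro col_sign_succ_right) simp_all
  have sgn: "sgn2 (par P \<noteq> par Q) (par Q \<noteq> par P) * comm_sign x (a, q) = comm_sign x (a, p)"
    by (cases "par P"; cases "par Q"; cases "par (fst a)") (simp_all add: comm_sign_x sgn2_def)
  show "drop_right ((\<lambda>(pre, g, suf). (pre @ [(fst g, q)], ((Q, Suc c), p), suf)) \<tau>) = (- 1) \<cdot> lift_right \<tau>"
    using sgn[symmetric]
    by (simp add: \<tau> drop_right_def lift_right_def marking_coeff_def row_sign_split row_sign_append row_sign_Cons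
        bpar_def koszul_sign_append koszul_sign_Cons col col_sign_same_col comm_sign_x[of "((Q, Suc c), p)"]
        mult_ac)
qed

lemma adm_prefix_Q_c:
    "adm_prefix i pre Q c \<longleftrightarrow> adm_prefix i pre Q (Suc c) \<and> \<not> (pre \<noteq> [] \<and> col (snd (last pre)) = c)"
  and adm_suffix_P_c:
    "adm_suffix j suf P (Suc c) \<longleftrightarrow> adm_suffix j suf P c \<and> \<not> (suf \<noteq> [] \<and> col (fst (hd suf)) = Suc c)"
  unfolding adm_prefix_def adm_suffix_def by auto

lemma bij_drop_left:
  "bij_betw (\<lambda>(pre, g, suf). (pre, ((Q, Suc c), p), suf))
     (drop_left_dom - drop_left_linked) (drop_right_dom - drop_right_linked)"
  (is "bij_betw ?f _ _")
proof -
  let ?g = "\<lambda>(pre, g, suf). (pre, (q, (P, c)), suf)"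
  show ?thesis
  proof (rule bij_betw_inverseI[where g = ?g])
    have g: "(q, (P, c)) \<in> Gp" "((Q, Suc c), p) \<in> Gp"
      using pq_in_boxes rows_in_boxes P Q by (auto simp: pgen_pair_iff)
    fix \<tau>
    show "\<tau> \<in> drop_left_dom - drop_left_linked \<Longrightarrow>
        ?f \<tau> \<in> drop_right_dom - drop_right_linked"
      "\<tau> \<in> drop_right_dom - drop_right_linked \<Longrightarrow>
        ?g \<tau> \<in> drop_left_dom - drop_left_linked"
      using g adm_prefix_Q_c adm_suffix_P_c
      by (auto simp: drop_left_dom_def drop_left_linked_def drop_right_dom_def drop_right_linked_def
          marked_iff)
    show "\<tau> \<in> drop_left_dom - drop_left_linked \<Longrightarrow>
        ?g (?f \<tau>) = \<tau>"
      "\<tau> \<in> drop_right_dom - drop_right_linked \<Longrightarrow>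
        ?f (?g \<tau>) = \<tau>"
      by (auto simp: drop_left_dom_def drop_right_dom_def)
  qed
qed

lemma drop_left_cancel:
  "fa_sum (drop_left_dom - drop_left_linked) drop_left
     \<oplus> fa_sum (drop_right_dom - drop_right_linked) drop_right = fa_zero"
proof (rule fa_sum_cancel_bij[OF bij_drop_left])
  fix \<tau> assume "\<tau> \<in> drop_left_dom - drop_left_linked"
  then obtain pre suf where \<tau>: "\<tau> = (pre, (q, (P, c)), suf)"
    by (auto simp: drop_left_dom_def)
  have coeff: "marking_coeff pre ((Q, Suc c), p) suf = marking_coeff pre (q, (P, c)) suf"
    by (simp add: marking_coeff_def row_sign_split col_sign_same_col)
  have "comm_sign x ((Q, Suc c), p) * sgn1 (par Q) = sgn1 (par P)"
    using sgn2_swap_sgn1[of "par P" "par Q"] by (simp add: comm_sign_x)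
  then have sign: "comm_sign x ((Q, Suc c), p) * M * sgn1 (par Q) = M * sgn1 (par P)" for M
    by (metis mult.commute mult.left_commute)
  show "drop_right ((\<lambda>(pre, g, suf). (pre, ((Q, Suc c), p), suf)) \<tau>) = (- 1) \<cdot> drop_left \<tau>"
    by (simp add: \<tau> drop_right_def drop_left_def coeff sign)
qed

definition insert_pair :: "marking \<times> nat \<Rightarrow> marking" where
  "insert_pair = (\<lambda>((pre, g, suf), K). (pre, (q, (K, c)), ((K, Suc c), p) # suf))"

lemma bij_insert_pair: "bij_betw insert_pair (drop_diag_dom \<times> {1..m+n}) drop_pair_dom"
proof -
  let ?g = "\<lambda>(pre, g, suf). ((pre, (q, p), tl suf), row (snd g))"
  show ?thesis
  proof (rule bij_betw_inverseI[where g = ?g])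
    fix z assume "z \<in> drop_diag_dom \<times> {1..m+n}"
    then obtain pre suf K where z: "z = ((pre, (q, p), suf), K)" and K: "K \<in> {1..m+n}"
      and h: "adm_prefix i pre Q c" "adm_suffix j suf P (Suc c)" "weight pre + 2 + weight suf = r"
      by (auto simp: drop_diag_dom_def marked_iff)
    have "(q, (K, c)) \<in> Gp" "((K, Suc c), p) \<in> Gp"
      using pq_in_boxes rows_in_boxes[OF K] by (auto simp: pgen_pair_iff)
    with h show "insert_pair z \<in> drop_pair_dom"
      by (simp add: z insert_pair_def drop_pair_dom_def marked_iff adm_suffix_Cons weight_Cons)
    show "?g (insert_pair z) = z"
      by (simp add: z insert_pair_def)
  next
    fix \<tau> assume "\<tau> \<in> drop_pair_dom"
    then obtain pre K h suf where \<tau>: "\<tau> = (pre, (q, (K, c)), h # suf)" and hp: "snd h = p"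
      and hh: "(q, (K, c)) \<in> Gp" "adm_prefix i pre Q c" "h \<in> Gp" "row (fst h) = K" "c < col (fst h)"
        "adm_suffix j suf P (Suc c)" "weight pre + 1 + weight (h # suf) = r"
      by (auto simp: drop_pair_dom_def marked_iff adm_suffix_Cons neq_Nil_conv prod_eq_iff)
    have "col (fst h) \<le> col (snd h)" using pgen_col_le[OF hh(3)] .
    then have h: "h = ((K, Suc c), p)" using hh(4,5) hp by (cases h; cases "fst h") auto
    have "(q, p) \<in> Gp" using pq_in_boxes by (simp add: pgen_pair_iff)
    with hh h have "(pre, (q, p), suf) \<in> drop_diag_dom"
      by (simp add: drop_diag_dom_def marked_iff weight_Cons)
    moreover have "K \<in> {1..m+n}" using hh(1) by (simp add: pgen_pair_iff)
    ultimately show "?g \<tau> \<in> drop_diag_dom \<times> {1..m+n}"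
      by (simp add: \<tau>)
    show "insert_pair (?g \<tau>) = \<tau>"
      by (simp add: \<tau> insert_pair_def h)
  qed
qed

lemma diag_shift_coeff:
  "comm_sign x (q, p) * shift (q, q) - shift (p, p) = - (sgn1 (par P) * (of_nat m - of_nat n))"
proof -
  have "comm_sign x (q, p) * shift (q, q) - shift (p, p)
      = sgn1 (par P) * (of_int (rho m n l c) - of_int (rho m n l (Suc c)))"
    by (cases "par P"; cases "par Q") (simp_all add: shift_def bpar_def comm_sign_x sgn1_def sgn2_def)
  then show ?thesis by (simp only: rho_succ mult_minus_right)
qed

lemma drop_pair_sum_rows:
  assumes card: "card {k \<in> {1..m+n}. par k} = n" and \<tau>: "\<tau> \<in> drop_diag_dom"
  shows "fa_sum {1..m+n} (\<lambda>K. drop_pair (insert_pair (\<tau>, K))) = (-1) \<cdot> drop_diag \<tau>"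
proof -
  obtain pre suf where \<tau>: "\<tau> = (pre, (q, p), suf)" using \<tau> by (auto simp: drop_diag_dom_def)
  define Y where "Y = row_sign pre * sgn1 (par Q) * row_sign suf * koszul_sign x pre"
  have "fa_sum {1..m+n} (\<lambda>K. drop_pair (insert_pair (\<tau>, K)))
      = fa_sum {1..m+n} (\<lambda>K. (- (Y * sgn1 (par P)) * sgn1 (par K)) \<cdot> eprod (pre @ suf))"
    by (rule fa_sum_cong) (simp add: \<tau> Y_def insert_pair_def drop_pair_def marking_coeff_def row_sign_split
        row_sign_Cons bpar_def col_sign_same_col mult_ac)
  also have "\<dots> = (- (Y * sgn1 (par P)) * (of_nat m - of_nat n)) \<cdot> eprod (pre @ suf)"
    unfolding fa_sum_scale_left sum_distrib_left[symmetric] sum_sgn1_rows[OF card] ..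
  also have "\<dots> = (-1) \<cdot> drop_diag \<tau>"
    using col_sign_eq_power[of "(q, p)"] unfolding \<tau> drop_diag_def marking_coeff_def
    by (simp add: diag_shift_coeff) (simp add: row_sign_split Y_def mult_ac)
  finally show ?thesis .
qed

lemma drop_diag_cancel:
  assumes card: "card {k \<in> {1..m+n}. par k} = n"
  shows "fa_sum drop_diag_dom drop_diag \<oplus> fa_sum drop_pair_dom drop_pair = fa_zero"
proof -
  have fin: "finite drop_diag_dom"
    using finite_marked by (rule finite_subset[rotated]) (auto simp: drop_diag_dom_def)
  have "fa_sum drop_pair_dom drop_pair
      = fa_sum drop_diag_dom (\<lambda>\<tau>. fa_sum {1..m+n} (\<lambda>K. drop_pair (insert_pair (\<tau>, K))))"
    by (simp add: fa_sum_reindex_bij[OF bij_insert_pair] fa_sum_Times[OF fin])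
  also have "\<dots> = fa_sum drop_diag_dom (\<lambda>\<tau>. (-1) \<cdot> drop_diag \<tau>)"
    by (rule fa_sum_cong) (rule drop_pair_sum_rows[OF card])
  finally show ?thesis
    by (intro ext) (simp add: fa_sum_def fa_add_def fa_scale_def fa_zero_def sum_negf)
qed

lemma sum_reduced_zero:
  assumes card: "card {k \<in> {1..m+n}. par k} = n"
  shows "fa_sum marked reduced = fa_zero"
proof -
  have sub: "lift_left_dom \<subseteq> marked" "drop_left_dom \<subseteq> marked" "drop_pair_dom \<subseteq> marked"
    "lift_right_dom \<subseteq> marked" "drop_right_dom \<subseteq> marked" "drop_diag_dom \<subseteq> marked"
    "drop_left_linked \<subseteq> drop_left_dom" "drop_right_linked \<subseteq> drop_right_dom"
    by (auto simp: lift_left_dom_def drop_left_dom_def drop_pair_dom_def lift_right_dom_def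
        drop_right_dom_def drop_diag_dom_def drop_left_linked_def drop_right_linked_def)
  have fin: "finite drop_left_dom" "finite drop_right_dom"
    using finite_marked sub by (auto intro: finite_subset)
  have "fa_sum marked reduced = fa_sum lift_left_dom lift_left \<oplus> fa_sum drop_left_dom drop_left
     \<oplus> fa_sum drop_pair_dom drop_pair \<oplus> fa_sum lift_right_dom lift_right
     \<oplus> fa_sum drop_right_dom drop_right \<oplus> fa_sum drop_diag_dom drop_diag"
    using sub by (simp add: reduced_def[abs_def] fa_sum_add fa_sum_on_set finite_marked)
  also have "\<dots> = fa_zero"
  proof
    fix w
    show "(fa_sum lift_left_dom lift_left \<oplus> fa_sum drop_left_dom drop_left
     \<oplus> fa_sum drop_pair_dom drop_pair \<oplus> fa_sum lift_right_dom lift_right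
     \<oplus> fa_sum drop_right_dom drop_right \<oplus> fa_sum drop_diag_dom drop_diag) w = fa_zero w"
      using fun_cong[OF lift_left_cancel, of w] fun_cong[OF lift_right_cancel, of w]
        fun_cong[OF drop_left_cancel, of w] fun_cong[OF drop_diag_cancel[OF card], of w]
      unfolding fa_sum_subset_diff[OF fin(1) sub(7), of drop_left]
        fa_sum_subset_diff[OF fin(2) sub(8), of drop_right]
      by (simp add: fa_add_def fa_zero_def) algebra
  qed
  finally show ?thesis .
qed

lemma sum_br_eprod_eq_bracket_terms:
  "fa_sum (adm_seqs r i j) (\<lambda>ps. row_sign ps \<cdot> br_eprod x ps) = fa_sum marked bracket_term"
proof
  fix w
  define F where "F = (\<lambda>(pre, g, suf). koszul_sign x pre \<cdot> (eprod pre \<odot> (br_etilde x g \<odot> eprod suf)))"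
  have "fa_sum (adm_seqs r i j) (\<lambda>ps. row_sign ps \<cdot> br_eprod x ps) w
      = (\<Sum>ps\<in>adm_seqs r i j. \<Sum>\<tau>\<in>positions ps. row_sign ps * F \<tau> w)"
    unfolding br_eprod_eq_sum F_def
    by (simp add: fa_sum_def fa_scale_def sum_distrib_left case_prod_unfold)
  also have "\<dots> = (\<Sum>z\<in>(SIGMA ps:adm_seqs r i j. positions ps). row_sign (fst z) * F (snd z) w)"
    by (subst sum.Sigma[OF finite_adm_seqs]) (auto simp: case_prod_unfold)
  also have "\<dots> = (\<Sum>\<tau>\<in>marked. row_sign (fst \<tau> @ fst (snd \<tau>) # snd (snd \<tau>)) * F \<tau> w)"
    by (rule sum.reindex_bij_witness[where j="\<lambda>z. snd z"
          and i="\<lambda>\<tau>. (fst \<tau> @ fst (snd \<tau>) # snd (snd \<tau>), \<tau>)"])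
      (auto simp: marked_def positions_def)
  finally show "fa_sum (adm_seqs r i j) (\<lambda>ps. row_sign ps \<cdot> br_eprod x ps) w = fa_sum marked bracket_term w"
    unfolding F_def by (simp add: bracket_term_def fa_sum_def fa_scale_def case_prod_unfold mult.assoc)
qed

theorem adjacent_mgen_tT_invariant:
  assumes card: "card {k \<in> {1..m+n}. par k} = n" and r: "1 \<le> r"
  shows "fa_gen x \<odot> tT m n l par r i j \<equiv>\<^sub>I \<chi> x \<cdot> tT m n l par r i j"
proof -
  let ?S = "adm_seqs r i j"
  have "fa_gen x \<odot> tT m n l par r i j = fa_sum ?S (\<lambda>ps. row_sign ps \<cdot> (fa_gen x \<odot> eprod ps))"
    by (simp add: tT_eq_sum_adm_seqs[OF r] fa_mult_sum_right finite_adm_seqs fa_mult_scale_right)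
  also have "\<dots> \<equiv>\<^sub>I fa_sum ?S (\<lambda>ps. row_sign ps \<cdot> (br_eprod x ps \<oplus> (koszul_sign x ps * \<chi> x) \<cdot> eprod ps))"
    by (intro cong_I_sum cong_I_scale finite_adm_seqs mgen_eprod_cong x_mgen adm_seqs_gens)
  also have "\<dots> = fa_sum ?S (\<lambda>ps. row_sign ps \<cdot> br_eprod x ps \<oplus> \<chi> x \<cdot> (row_sign ps \<cdot> eprod ps))"
    by (rule fa_sum_cong) (simp add: koszul_chi_x fun_eq_iff fa_add_def fa_scale_def algebra_simps)
  also have "\<dots> = fa_sum ?S (\<lambda>ps. row_sign ps \<cdot> br_eprod x ps) \<oplus> \<chi> x \<cdot> tT m n l par r i j"
    by (simp add: tT_eq_sum_adm_seqs[OF r] fa_sum_add fa_scale_sum)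
  also have "\<dots> \<equiv>\<^sub>I fa_sum marked reduced \<oplus> \<chi> x \<cdot> tT m n l par r i j"
    unfolding sum_br_eprod_eq_bracket_terms
    by (intro cong_I_add cong_I_refl cong_I_sum finite_marked) (auto intro: bracket_term_reduce)
  finally show ?thesis by (simp add: sum_reduced_zero[OF card])
qed

end

context rectangle
begin

lemma commutator_annihilates_invariant:
  assumes t: "t \<in> FA m n l" and x: "x1 \<in> Gm" "x2 \<in> Gm"
    and inv: "fa_gen x1 \<odot> t \<equiv>\<^sub>I \<chi> x1 \<cdot> t" "fa_gen x2 \<odot> t \<equiv>\<^sub>I \<chi> x2 \<cdot> t"
  shows "(fa_gen x1 \<odot> fa_gen x2 \<ominus> fa_gen x2 \<odot> fa_gen x1) \<odot> t \<equiv>\<^sub>I fa_zero"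
proof -
  have "(fa_gen x1 \<odot> fa_gen x2 \<ominus> fa_gen x2 \<odot> fa_gen x1) \<odot> t
      = fa_gen x1 \<odot> (fa_gen x2 \<odot> t) \<ominus> fa_gen x2 \<odot> (fa_gen x1 \<odot> t)"
    by (simp add: fa_mult_diff_left fa_mult_assoc)
  also have "\<dots> \<equiv>\<^sub>I \<chi> x2 \<cdot> (fa_gen x1 \<odot> t) \<ominus> \<chi> x1 \<cdot> (fa_gen x2 \<odot> t)"
    using cong_I_mult_left[OF inv(2), of "fa_gen x1"] cong_I_mult_left[OF inv(1), of "fa_gen x2"] x
    by (intro cong_I_diff) (simp_all add: fa_mult_scale_right FA_gen mgen_gen)
  also have "\<dots> \<equiv>\<^sub>I \<chi> x2 \<cdot> \<chi> x1 \<cdot> t \<ominus> \<chi> x1 \<cdot> \<chi> x2 \<cdot> t"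
    by (intro cong_I_diff cong_I_scale inv)
  also have "\<dots> = fa_zero"
    by (simp add: mult.commute)
  finally show ?thesis .
qed

lemma mgen_eq_commutator:
  assumes "((P, c'), (P, Suc c)) \<in> Gm" "((P, Suc c), (Q, c)) \<in> Gm"
  shows "fa_gen ((P, c'), (Q, c)) \<equiv>\<^sub>J
    fa_gen ((P, c'), (P, Suc c)) \<odot> fa_gen ((P, Suc c), (Q, c))
    \<ominus> fa_gen ((P, Suc c), (Q, c)) \<odot> fa_gen ((P, c'), (P, Suc c))"
proof (rule cong_J_sym)
  have "c' \<noteq> c" using assms by (simp add: mgens_def)
  then have "Urel par ((P, c'), (P, Suc c)) ((P, Suc c), (Q, c))
    = fa_gen ((P, c'), (P, Suc c)) \<odot> fa_gen ((P, Suc c), (Q, c))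
      \<ominus> fa_gen ((P, Suc c), (Q, c)) \<odot> fa_gen ((P, c'), (P, Suc c)) \<ominus> fa_gen ((P, c'), (Q, c))"
    unfolding Urel_def fa_sbr_def gl_br_def
    by (intro ext) (simp add: sgn2_def gpar_def bpar_def fa_diff_def fa_scale_def fa_zero_def)
  then show "fa_gen ((P, c'), (P, Suc c)) \<odot> fa_gen ((P, Suc c), (Q, c))
      \<ominus> fa_gen ((P, Suc c), (Q, c)) \<odot> fa_gen ((P, c'), (P, Suc c)) \<equiv>\<^sub>J fa_gen ((P, c'), (Q, c))"
    using J_rel[OF mgen_gen mgen_gen, OF assms, of par] by (simp add: cong_J_def)
qed

lemma mgen_invariant_from_adjacent:
  assumes t: "t \<in> FA m n l"
    and adjacent: "\<And>P Q c. ((P, Suc c), (Q, c)) \<in> Gm \<Longrightarrow>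
      fa_gen ((P, Suc c), (Q, c)) \<odot> t \<equiv>\<^sub>I \<chi> ((P, Suc c), (Q, c)) \<cdot> t"
  shows "y \<in> Gm \<Longrightarrow> fa_gen y \<odot> t \<equiv>\<^sub>I \<chi> y \<cdot> t"
proof (induction "col (fst y) - col (snd y)" arbitrary: y rule: less_induct)
  case less
  obtain P c' Q c where y: "y = ((P, c'), (Q, c))" by (cases y) auto
  have P: "P \<in> {1..m+n}" and c: "1 \<le> c" "c' \<le> l" "c < c'"
    using less.prems y by (auto simp: mgens_def gens_def)
  show ?case
  proof (cases "c' = Suc c")
    case True
    then show ?thesis using adjacent less.prems y by simp
  next
    case False
    then have cc: "Suc c < c'" using c by simp
    define x1 where "x1 = ((P, c'), (P, Suc c))"
    define x2 where "x2 = ((P, Suc c), (Q, c))"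
    have x: "x1 \<in> Gm" "x2 \<in> Gm" using less.prems P c cc by (auto simp: x1_def x2_def y mgens_def gens_def)
    have inv: "fa_gen x1 \<odot> t \<equiv>\<^sub>I \<chi> x1 \<cdot> t" "fa_gen x2 \<odot> t \<equiv>\<^sub>I \<chi> x2 \<cdot> t"
      by (rule less.hyps[OF _ x(1)], use cc in \<open>simp add: x1_def y\<close>)
        (rule less.hyps[OF _ x(2)], use cc in \<open>simp add: x2_def y\<close>)
    have "fa_gen y \<odot> t \<equiv>\<^sub>I (fa_gen x1 \<odot> fa_gen x2 \<ominus> fa_gen x2 \<odot> fa_gen x1) \<odot> t"
      using mgen_eq_commutator[OF x[unfolded x1_def x2_def]]
      by (intro cong_J_imp_cong_I cong_J_mult_right t) (simp add: x1_def x2_def y)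
    also have "\<dots> \<equiv>\<^sub>I fa_zero"
      by (rule commutator_annihilates_invariant[OF t x inv])
    also have "fa_zero = \<chi> y \<cdot> t"
      using less.prems cc by (simp add: chi_eq mgen_gen y)
    finally show ?thesis .
  qed
qed

lemma mgen_tT_invariant:
  assumes card: "card {k \<in> {1..m+n}. par k} = n" and y: "y \<in> Gm"
  shows "fa_gen y \<odot> tT m n l par r i j \<equiv>\<^sub>I \<chi> y \<cdot> tT m n l par r i j"
proof (rule mgen_invariant_from_adjacent[OF tT_FA _ y])
  fix P Q c assume x: "((P, Suc c), (Q, c)) \<in> Gm"
  show "fa_gen ((P, Suc c), (Q, c)) \<odot> tT m n l par r i j \<equiv>\<^sub>I \<chi> ((P, Suc c), (Q, c)) \<cdot> tT m n l par r i j"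
  proof (cases "r = 0")
    case True
    then show ?thesis
      using cong_I_mult_mgen[OF x FA_one] by (simp add: tT_def cong_I_refl)
  next
    case False
    from x have "adjacent_tseq m n l P Q c"
      by unfold_locales (auto simp: mgens_def gens_def)
    then show ?thesis using False card by (simp add: adjacent_tseq.adjacent_mgen_tT_invariant)
  qed
qed

lemma mgen_supercomm_tT:
  assumes card: "card {k \<in> {1..m+n}. par k} = n" and y: "y \<in> Gm"
  shows "fa_sbr (gpar par y) b (fa_gen y) (tT m n l par r i j) \<in> Ichi m n l par"
proof -
  let ?t = "tT m n l par r i j"
  have "fa_sbr (gpar par y) b (fa_gen y) ?t \<equiv>\<^sub>I \<chi> y \<cdot> ?t \<ominus> sgn2 (gpar par y) b \<cdot> \<chi> y \<cdot> ?t"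
    unfolding fa_sbr_def
    by (intro cong_I_diff cong_I_scale mgen_tT_invariant card y cong_I_mult_mgen tT_FA)
  also have "\<chi> y \<cdot> ?t \<ominus> sgn2 (gpar par y) b \<cdot> \<chi> y \<cdot> ?t = fa_zero"
    using chi_nonzero_same_row[OF mgen_gen[OF y]] gpar_same_row[of y par]
    by (cases "\<chi> y = 0") (auto simp: fun_eq_iff fa_diff_def fa_scale_def fa_zero_def sgn2_def)
  finally show ?thesis by (simp add: cong_I_def fa_diff_def fa_zero_def)
qed

end

theorem proposition4p2:
  fixes m n l :: nat and par :: "nat \<Rightarrow> bool" and i j r :: nat and c :: "gen \<Rightarrow> complex"
  assumes "card {k \<in> {1..m+n}. par k} = n"
    and "i \<in> {1..m+n}" and "j \<in> {1..m+n}" and "r \<le> l"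
  shows "tT m n l par r i j \<in> Up m n l par
    \<and> br_m m n l par c (par i \<noteq> par j) (tT m n l par r i j) \<in> Ichi m n l par"
proof
  interpret rectangle m n l par .
  have "tT m n l par r i j = tT m n l par r i j \<oplus> fa_zero" by simp
  then show "tT m n l par r i j \<in> Up m n l par"
    using tT_FA tT_supported_on_pgens J_zero unfolding Up_def supported_on_def by blast
  show "br_m m n l par c (par i \<noteq> par j) (tT m n l par r i j) \<in> Ichi m n l par"
    unfolding br_m_def
    by (intro subspace_sum[OF subspace_Ichi] finite_mgens I_scale mgen_supercomm_tT assms(1))
qed

end
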